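(* Let $L$ be a real-valued Lévy process with characteristics $(b,q,\lambda)$ with respect to the truncation function $\tau$, let $s<t$, and let $(\pi_n)_{n\in\mathbb N}$ be a normal sequence of partitions $\pi_n=(p_{k,n})_{k=0,\dots,m_n}$ of $[s,t]$. Put $d_{k,n}=L(p_{k,n})-L(p_{k-1,n})$. Then (a) $\lim_{n\to\infty}\sum_{k=1}^{m_n}E[\tau(d_{k,n})]=(t-s)b$; (b) $\lim_{n\to\infty}\sum_{k=1}^{m_n}E[\tau^2(d_{k,n})]=(t-s)\Big(\int_{\mathbb R}(|\beta|^2\wedge1)\,\lambda(d\beta)+q\Big)$.
   Context: The truncation function is $\tau(\alpha)=\alpha$ for $|\alpha|\le1$ and $\tau(\alpha)=\alpha/|\alpha|$ for $|\alpha|>1$. A real-valued Lévy process $L$ has characteristics $(b,q,\lambda)$ with respect to $\tau$ if $E[e^{i\beta L(1)}]=\exp\big(i\beta b-\tfrac12 q\beta^2+\int_{\mathbb R}(e^{i\beta\alpha}-1-i\beta\tau(\alpha))\lambda(d\alpha)\big)$ for all $\beta\in\mathbb R$. A normal sequence of partitions of $[s,t]$ is a sequence of partitions $s=p_{0,n}<p_{1,n}<\dots<p_{m_n,n}=t$ whose mesh $\max_k(p_{k,n}-p_{k-1,n})$ tends to $0$. *)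

theory Defs
  imports "HOL-Probability.Probability"
begin

definition trunc :: "real \<Rightarrow> real" where
  "trunc \<alpha> = (if \<bar>\<alpha>\<bar> \<le> 1 then \<alpha> else \<alpha> / \<bar>\<alpha>\<bar>)"

definition levy_process :: "'a measure \<Rightarrow> (real \<Rightarrow> 'a \<Rightarrow> real) \<Rightarrow> bool" where
  "levy_process M L \<longleftrightarrow>
     prob_space M \<and>
     (\<forall>t\<ge>0. L t \<in> borel_measurable M) \<and>
     (AE \<omega> in M. L 0 \<omega> = 0) \<and>
     (\<forall>(n::nat) (u::nat \<Rightarrow> real). 0 \<le> u 0 \<and> (\<forall>i<n. u i < u (Suc i)) \<longrightarrow>
        prob_space.indep_vars M (\<lambda>_. borel) (\<lambda>i \<omega>. L (u (Suc i)) \<omega> - L (u i) \<omega>) {..<n}) \<and>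
     (\<forall>s t. 0 \<le> s \<and> s \<le> t \<longrightarrow>
        distr M borel (\<lambda>\<omega>. L t \<omega> - L s \<omega>) = distr M borel (L (t - s))) \<and>
     (\<forall>t\<ge>0. \<forall>e>0. ((\<lambda>h. measure M {\<omega>\<in>space M. e < \<bar>L (t + h) \<omega> - L t \<omega>\<bar>}) \<longlongrightarrow> 0)
        (at 0 within {-t..})) \<and>
     (AE \<omega> in M. \<forall>t\<ge>0. continuous (at_right t) (\<lambda>u. L u \<omega>) \<and>
        (t > 0 \<longrightarrow> (\<exists>l. ((\<lambda>u. L u \<omega>) \<longlongrightarrow> l) (at_left t))))"

definition levy_characteristics ::
  "'a measure \<Rightarrow> (real \<Rightarrow> 'a \<Rightarrow> real) \<Rightarrow> real \<Rightarrow> real \<Rightarrow> real measure \<Rightarrow> bool" where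
  "levy_characteristics M L b q lam \<longleftrightarrow>
     0 \<le> q \<and> sets lam = sets borel \<and> emeasure lam {0} = 0 \<and>
     integrable lam (\<lambda>\<alpha>. min (\<alpha>\<^sup>2) 1) \<and>
     (\<forall>\<beta>::real. char (distr M borel (L 1)) \<beta> =
        exp (\<i> * complex_of_real (\<beta> * b) - complex_of_real (q * \<beta>\<^sup>2 / 2)
             + (CLINT \<alpha>|lam. iexp (\<beta> * \<alpha>) - 1 - \<i> * complex_of_real (\<beta> * trunc \<alpha>))))"

definition normal_partitions :: "real \<Rightarrow> real \<Rightarrow> (nat \<Rightarrow> nat) \<Rightarrow> (nat \<Rightarrow> nat \<Rightarrow> real) \<Rightarrow> bool" where
  "normal_partitions s t m p \<longleftrightarrow>
     (\<forall>n. p n 0 = s \<and> p n (m n) = t \<and> (\<forall>k<m n. p n k < p n (Suc k))) \<and>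
     (\<lambda>n. Max {p n k - p n (k - 1) | k. 1 \<le> k \<and> k \<le> m n}) \<longlonglongrightarrow> 0"

end

theory Submission
  imports Defs
begin

(* The characteristic function of L(h) is exp (h psi), psi the Levy-Khintchine exponent:
   infinite divisibility gives this for rational h, and stochastic continuity extends it.
   With kappa x = 1 - sin x / x, which is comparable to min (x^2) 1, averaging over u in [-1, 1]
   turns psi v - psi (v + u) into twice the characteristic function of the finite measure
   rho = kappa lambda + (q/6) delta_0, and turns the characteristic function of L(h) into that
   of kappa(x)/h times the law of L(h).  Since (exp (h psi) - 1)/h tends to psi, boundedly on
   compacts, these finite measures converge weakly to rho as h -> 0+.  Integrating the bounded
   continuous functions (tau - sin)/kappa and tau^2/kappa yields E tau(L h)/h -> b and
   E tau^2(L h)/h -> int min (alpha^2) 1 dlambda + q.  By stationarity each partition sum is a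
   sum of f over the mesh lengths, where f(h)/h converges as h -> 0+; as the mesh tends to 0
   the sum tends to (t - s) times that limit. *)

section \<open>Truncation and the kernel \<open>1 - sin x / x\<close>\<close>

lemma trunc_eq_clamp: "trunc x = max (-1) (min 1 x)"
  unfolding trunc_def by (auto simp: abs_if)

lemma isCont_trunc [continuous_intros]: "isCont trunc x"
  unfolding trunc_eq_clamp by (intro continuous_intros)

lemma borel_measurable_trunc [measurable]: "trunc \<in> borel_measurable borel"
  by (intro borel_measurable_continuous_onI continuous_at_imp_continuous_on ballI isCont_trunc)

lemma abs_trunc_le_1: "\<bar>trunc x\<bar> \<le> 1"
  unfolding trunc_eq_clamp by auto

lemma trunc_small [simp]: "\<bar>x\<bar> \<le> 1 \<Longrightarrow> trunc x = x"
  unfolding trunc_def by simp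

lemma min_square_1_small: "\<bar>x::real\<bar> \<le> 1 \<Longrightarrow> min (x\<^sup>2) 1 = x\<^sup>2"
  by (simp add: abs_le_square_iff[of x 1, simplified])

lemma min_square_1_large: "1 < \<bar>x::real\<bar> \<Longrightarrow> min (x\<^sup>2) 1 = 1"
  by (metis abs_le_square_iff[of x 1, simplified] less_le_not_le min.absorb2 nle_le)

lemma trunc_square: "(trunc x)\<^sup>2 = min (x\<^sup>2) 1"
proof (cases "\<bar>x\<bar> \<le> 1")
  case False
  then show ?thesis
    by (simp add: trunc_def min_square_1_large power_divide)
qed (simp add: min_square_1_small)

lemma sin_le_taylor5:
  fixes x :: real assumes "0 \<le> x" shows "sin x \<le> x - x^3/6 + x^5/120"
proof -
  have "\<bar>sin x - (x - x^3/6)\<bar> \<le> x^5/120"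
    using Maclaurin_sin_bound[of x 5] assms
    by (simp add: lessThan_nat_numeral sin_coeff_def fact_numeral)
  then show ?thesis by linarith
qed

lemma sin_ge_taylor4: fixes x :: real shows "x - x^3/6 - x^4/24 \<le> sin x"
proof -
  have "\<bar>sin x - (x - x^3/6)\<bar> \<le> x^4/24"
    using Maclaurin_sin_bound[of x 4]
    by (simp add: lessThan_nat_numeral sin_coeff_def fact_numeral power_even_abs_numeral)
  then show ?thesis by linarith
qed

definition one_minus_sinc :: "real \<Rightarrow> real" where
  "one_minus_sinc x = (if x = 0 then 0 else 1 - sin x / x)"

lemma one_minus_sinc_0 [simp]: "one_minus_sinc 0 = 0"
  by (simp add: one_minus_sinc_def)

lemma borel_measurable_one_minus_sinc [measurable]: "one_minus_sinc \<in> borel_measurable borel"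
  unfolding one_minus_sinc_def by measurable

lemma one_minus_sinc_minus [simp]: "one_minus_sinc (- x) = one_minus_sinc x"
  unfolding one_minus_sinc_def by simp

lemma one_minus_sinc_le_pos:
  fixes x :: real assumes "0 < x" shows "one_minus_sinc x \<le> 2 * min (x\<^sup>2) 1"
proof -
  have k: "one_minus_sinc x = 1 - sin x / x" using assms by (simp add: one_minus_sinc_def)
  show ?thesis
  proof (cases "x \<le> 1")
    case True
    have "(1 - x^2/6 - x^3/24) * x = x - x^3/6 - x^4/24"
      by (simp add: field_simps power2_eq_square power3_eq_cube power4_eq_xxxx)
    then have "1 - x^2/6 - x^3/24 \<le> sin x / x"
      using sin_ge_taylor4[of x] assms by (simp add: le_divide_eq)
    moreover have "x^3 \<le> x^2" using True assms by (simp add: power_decreasing)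
    moreover have "min (x\<^sup>2) 1 = x\<^sup>2" using True assms by (simp add: min_square_1_small)
    ultimately show ?thesis unfolding k using zero_le_power2[of x] by linarith
  next
    case False
    have "-1 \<le> sin x / x" using abs_sin_x_le_abs_x[of x] assms by (simp add: field_simps)
    then show ?thesis using False min_square_1_large[of x] unfolding k by simp
  qed
qed

lemma one_minus_sinc_ge_pos:
  fixes x :: real assumes "0 < x" shows "2/15 * min (x\<^sup>2) 1 \<le> one_minus_sinc x"
proof -
  have k: "one_minus_sinc x = 1 - sin x / x" using assms by (simp add: one_minus_sinc_def)
  show ?thesis
  proof (cases "x \<le> 2")
    case True
    have "(1 - x^2/6 + x^4/120) * x = x - x^3/6 + x^5/120"
      by (simp add: field_simps power2_eq_square power3_eq_cube power4_eq_xxxx numeral_eq_Suc)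
    then have "sin x / x \<le> 1 - x^2/6 + x^4/120"
      using sin_le_taylor5[of x] assms by (simp add: divide_le_eq)
    moreover have "x^4 \<le> 4 * x^2"
    proof -
      have "x^2 \<le> 2^2" using True assms by (intro power_mono) auto
      then have "x^2 * x^2 \<le> 4 * x^2" by (intro mult_right_mono) auto
      then show ?thesis by (simp add: power4_eq_xxxx power2_eq_square)
    qed
    ultimately show ?thesis unfolding k using min.cobounded1[of "x\<^sup>2" 1] by linarith
  next
    case False
    then have "sin x \<le> x / 2" using sin_le_one[of x] by linarith
    then have "sin x / x \<le> 1/2" using assms by (simp add: divide_le_eq)
    then show ?thesis unfolding k using min.cobounded2[of "x\<^sup>2" 1] by linarith
  qed
qed

lemma one_minus_sinc_abs [simp]: "one_minus_sinc \<bar>x\<bar> = one_minus_sinc x"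
  by (cases "0 \<le> x") simp_all

lemma one_minus_sinc_le: "one_minus_sinc x \<le> 2 * min (x\<^sup>2) 1"
  using one_minus_sinc_le_pos[of "\<bar>x\<bar>"] by (cases "x = 0") (simp add: one_minus_sinc_def, simp)

lemma one_minus_sinc_ge: "2/15 * min (x\<^sup>2) 1 \<le> one_minus_sinc x"
  using one_minus_sinc_ge_pos[of "\<bar>x\<bar>"] by (cases "x = 0") (simp add: one_minus_sinc_def, simp)

lemma one_minus_sinc_nonneg: "0 \<le> one_minus_sinc x"
  using one_minus_sinc_ge[of x] zero_le_power2[of x] by linarith

lemma one_minus_sinc_pos: "x \<noteq> 0 \<Longrightarrow> 0 < one_minus_sinc x"
proof -
  assume "x \<noteq> 0"
  then have "0 < min (x\<^sup>2) 1" by simp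
  then show ?thesis using one_minus_sinc_ge[of x] by linarith
qed

lemma one_minus_sinc_near_0_pos:
  fixes x :: real assumes "0 < x" "x \<le> 1"
  shows "\<bar>x\<^sup>2 - 6 * one_minus_sinc x\<bar> \<le> x^3 / 4"
proof -
  have "(1 - x^2/6 - x^3/24) * x = x - x^3/6 - x^4/24"
    by (simp add: field_simps power2_eq_square power3_eq_cube power4_eq_xxxx)
  then have lower: "1 - x^2/6 - x^3/24 \<le> sin x / x"
    using sin_ge_taylor4[of x] assms by (simp add: le_divide_eq)
  have "(1 - x^2/6 + x^4/120) * x = x - x^3/6 + x^5/120"
    by (simp add: field_simps power2_eq_square power3_eq_cube power4_eq_xxxx numeral_eq_Suc)
  then have upper: "sin x / x \<le> 1 - x^2/6 + x^4/120"
    using sin_le_taylor5[of x] assms by (simp add: divide_le_eq)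
  have "x^4 \<le> x^3" "0 \<le> x^3" using assms by (simp_all add: power_decreasing)
  moreover have "x\<^sup>2 - 6 * one_minus_sinc x = x\<^sup>2 - 6 + 6 * (sin x / x)"
    using assms by (simp add: one_minus_sinc_def algebra_simps)
  ultimately show ?thesis using lower upper unfolding abs_le_iff by linarith
qed

lemma one_minus_sinc_near_0:
  "\<bar>x\<bar> \<le> 1 \<Longrightarrow> \<bar>x\<^sup>2 - 6 * one_minus_sinc x\<bar> \<le> \<bar>x\<bar>^3 / 4"
  using one_minus_sinc_near_0_pos[of "\<bar>x\<bar>"] by (cases "x = 0") (simp add: one_minus_sinc_def, simp)

lemma isCont_one_minus_sinc: "x \<noteq> 0 \<Longrightarrow> isCont one_minus_sinc x"
proof -
  assume "x \<noteq> 0"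
  then have "\<forall>\<^sub>F y in nhds x. one_minus_sinc y = 1 - sin y / y"
    by (rule eventually_mono[OF t1_space_nhds]) (simp add: one_minus_sinc_def)
  moreover have "isCont (\<lambda>y. 1 - sin y / y) x" using \<open>x \<noteq> 0\<close> by (intro continuous_intros)
  ultimately show ?thesis by (simp add: isCont_cong)
qed

text \<open>The values at 0 are the limits, so both ratios are bounded and continuous.\<close>

definition trunc_sin_ratio :: "real \<Rightarrow> real" where
  "trunc_sin_ratio x = (if x = 0 then 0 else (trunc x - sin x) / one_minus_sinc x)"

definition trunc_sq_ratio :: "real \<Rightarrow> real" where
  "trunc_sq_ratio x = (if x = 0 then 6 else (trunc x)\<^sup>2 / one_minus_sinc x)"

lemma one_minus_sinc_mult_trunc_sin_ratio: "one_minus_sinc x * trunc_sin_ratio x = trunc x - sin x"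
  using one_minus_sinc_pos[of x]
  by (cases "x = 0") (simp_all add: trunc_sin_ratio_def trunc_def)

lemma one_minus_sinc_mult_trunc_sq_ratio: "one_minus_sinc x * trunc_sq_ratio x = (trunc x)\<^sup>2"
  using one_minus_sinc_pos[of x]
  by (cases "x = 0") (simp add: trunc_sq_ratio_def one_minus_sinc_def, simp add: trunc_sq_ratio_def)

lemma trunc_sin_ratio_small: "\<bar>x\<bar> \<le> 1 \<Longrightarrow> trunc_sin_ratio x = x"
proof (cases "x = 0")
  case False
  assume "\<bar>x\<bar> \<le> 1"
  have "one_minus_sinc x * x = x - sin x"
    using False by (simp add: one_minus_sinc_def algebra_simps)
  then have "trunc_sin_ratio x = one_minus_sinc x * x / one_minus_sinc x"
    using \<open>\<bar>x\<bar> \<le> 1\<close> False by (simp add: trunc_sin_ratio_def)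
  then show ?thesis using one_minus_sinc_pos[OF False] by simp
qed (simp add: trunc_sin_ratio_def)

lemma abs_trunc_sin_ratio_le: "\<bar>trunc_sin_ratio x\<bar> \<le> 15"
proof (cases "\<bar>x\<bar> \<le> 1")
  case False
  then have "x \<noteq> 0" "2/15 \<le> one_minus_sinc x"
    using one_minus_sinc_ge[of x] min_square_1_large[of x] by auto
  moreover have "\<bar>trunc x - sin x\<bar> \<le> 2"
    using abs_trunc_le_1[of x] abs_sin_le_one[of x] by linarith
  ultimately have "\<bar>trunc x - sin x\<bar> / one_minus_sinc x \<le> 2 / (2/15)"
    by (intro frac_le) auto
  then have "\<bar>trunc_sin_ratio x\<bar> \<le> 2 / (2/15)"
    using \<open>x \<noteq> 0\<close> one_minus_sinc_pos[of x] by (simp add: trunc_sin_ratio_def)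
  then show ?thesis by simp
qed (simp add: trunc_sin_ratio_small)

lemma abs_trunc_sq_ratio_le: "\<bar>trunc_sq_ratio x\<bar> \<le> 15/2"
proof (cases "x = 0")
  case False
  then have "0 < min (x\<^sup>2) 1" by simp
  then have "min (x\<^sup>2) 1 / one_minus_sinc x \<le> min (x\<^sup>2) 1 / (2/15 * min (x\<^sup>2) 1)"
    using one_minus_sinc_ge[of x] one_minus_sinc_pos[OF False] by (intro divide_left_mono) auto
  then show ?thesis
    using False one_minus_sinc_pos[OF False] \<open>0 < min (x\<^sup>2) 1\<close>
    by (simp add: trunc_sq_ratio_def trunc_square)
qed (simp add: trunc_sq_ratio_def)

lemma trunc_sq_ratio_near_0: "\<bar>x\<bar> \<le> 1 \<Longrightarrow> \<bar>trunc_sq_ratio x - 6\<bar> \<le> 2 * \<bar>x\<bar>"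
proof (cases "x = 0")
  case False
  assume x: "\<bar>x\<bar> \<le> 1"
  have pos: "0 < one_minus_sinc x" using one_minus_sinc_pos[OF False] .
  have "\<bar>trunc_sq_ratio x - 6\<bar> = \<bar>x\<^sup>2 - 6 * one_minus_sinc x\<bar> / one_minus_sinc x"
    using x pos False by (simp add: trunc_sq_ratio_def field_simps)
  also have "\<dots> \<le> (\<bar>x\<bar>^3 / 4) / (2/15 * x\<^sup>2)"
    using one_minus_sinc_near_0[OF x] one_minus_sinc_ge[of x] min_square_1_small[OF x] False
    by (intro frac_le) auto
  also have "\<dots> = 15/8 * \<bar>x\<bar>"
    using False by (simp add: power2_eq_square power3_eq_cube field_simps)
  finally show ?thesis using abs_ge_zero[of x] by linarith
qed (simp add: trunc_sq_ratio_def)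

lemma isCont_trunc_sin_ratio: "isCont trunc_sin_ratio x"
proof (cases "x = 0")
  case True
  have "\<forall>\<^sub>F y in nhds x. trunc_sin_ratio y = y"
    using eventually_nhds_in_open[of "ball 0 1" x] True
    by (auto elim!: eventually_mono simp: trunc_sin_ratio_small dist_norm)
  then show ?thesis by (simp add: isCont_cong)
next
  case False
  then have "\<forall>\<^sub>F y in nhds x. trunc_sin_ratio y = (trunc y - sin y) / one_minus_sinc y"
    by (rule eventually_mono[OF t1_space_nhds]) (simp add: trunc_sin_ratio_def)
  moreover have "isCont (\<lambda>y. (trunc y - sin y) / one_minus_sinc y) x"
    using False one_minus_sinc_pos[OF False]
    by (intro continuous_intros isCont_one_minus_sinc) auto
  ultimately show ?thesis by (simp add: isCont_cong)
qed

lemma isCont_trunc_sq_ratio: "isCont trunc_sq_ratio x"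
proof (cases "x = 0")
  case True
  have "((\<lambda>y. trunc_sq_ratio y - 6) \<longlongrightarrow> 0) (nhds 0)"
  proof (rule Lim_null_comparison)
    show "\<forall>\<^sub>F y in nhds 0. norm (trunc_sq_ratio y - 6) \<le> 2 * \<bar>y\<bar>"
      using eventually_nhds_in_open[of "ball 0 1" 0]
      by (auto elim!: eventually_mono simp: trunc_sq_ratio_near_0 dist_norm)
    show "((\<lambda>y. 2 * \<bar>y\<bar>) \<longlongrightarrow> 0) (nhds (0::real))"
      using tendsto_mult_right_zero[OF tendsto_rabs_zero[OF filterlim_ident], of 2] by simp
  qed
  then have "((\<lambda>y. trunc_sq_ratio y - 6 + 6) \<longlongrightarrow> 0 + 6) (nhds 0)"
    by (intro tendsto_add) auto
  then have "(trunc_sq_ratio \<longlongrightarrow> trunc_sq_ratio 0) (nhds 0)"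
    by (simp add: trunc_sq_ratio_def[abs_def])
  then show ?thesis using True by (simp add: isCont_def tendsto_at_iff_tendsto_nhds)
next
  case False
  then have "\<forall>\<^sub>F y in nhds x. trunc_sq_ratio y = (trunc y)\<^sup>2 / one_minus_sinc y"
    by (rule eventually_mono[OF t1_space_nhds]) (simp add: trunc_sq_ratio_def)
  moreover have "isCont (\<lambda>y. (trunc y)\<^sup>2 / one_minus_sinc y) x"
    using False one_minus_sinc_pos[OF False]
    by (intro continuous_intros isCont_one_minus_sinc) auto
  ultimately show ?thesis by (simp add: isCont_cong)
qed

lemma borel_measurable_trunc_sin_ratio [measurable]: "trunc_sin_ratio \<in> borel_measurable borel"
  and borel_measurable_trunc_sq_ratio [measurable]: "trunc_sq_ratio \<in> borel_measurable borel"
  by (intro borel_measurable_continuous_onI continuous_at_imp_continuous_on ballI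
      isCont_trunc_sin_ratio isCont_trunc_sq_ratio)+

section \<open>The Levy-Khintchine exponent\<close>

definition lk_integrand :: "real \<Rightarrow> real \<Rightarrow> complex" where
  "lk_integrand \<beta> \<alpha> = iexp (\<beta> * \<alpha>) - 1 - \<i> * complex_of_real (\<beta> * trunc \<alpha>)"

definition lk_exponent :: "real \<Rightarrow> real \<Rightarrow> real measure \<Rightarrow> real \<Rightarrow> complex" where
  "lk_exponent b q lam \<beta> = \<i> * complex_of_real (\<beta> * b) - complex_of_real (q * \<beta>\<^sup>2 / 2)
     + (CLINT \<alpha>|lam. lk_integrand \<beta> \<alpha>)"

lemma lk_integrand_0 [simp]: "lk_integrand \<beta> 0 = 0"
  by (simp add: lk_integrand_def trunc_def)

lemma lk_exponent_0 [simp]: "lk_exponent b q lam 0 = 0"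
  by (simp add: lk_exponent_def lk_integrand_def)

lemma borel_measurable_lk_integrand [measurable]:
  "(\<lambda>x. lk_integrand (f x) (g x)) \<in> borel_measurable N"
  if "f \<in> borel_measurable N" "g \<in> borel_measurable N"
  using that unfolding lk_integrand_def by measurable

lemma norm_lk_integrand_le:
  "cmod (lk_integrand \<beta> \<alpha>) \<le> (\<beta>\<^sup>2/2 + \<bar>\<beta>\<bar> + 2) * min (\<alpha>\<^sup>2) 1"
proof (cases "\<bar>\<alpha>\<bar> \<le> 1")
  case True
  have "cmod (iexp (\<beta> * \<alpha>) - (\<Sum>k \<le> 1. (\<i> * (\<beta> * \<alpha>))^k / fact k))
      \<le> \<bar>\<beta> * \<alpha>\<bar>^(Suc 1) / fact (Suc 1)"
    by (rule iexp_approx1)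
  moreover have "\<bar>\<beta> * \<alpha>\<bar>^(Suc 1) / fact (Suc 1) = \<beta>\<^sup>2/2 * \<alpha>\<^sup>2"
    by (simp add: power_mult_distrib power2_eq_square)
  ultimately have "cmod (lk_integrand \<beta> \<alpha>) \<le> \<beta>\<^sup>2/2 * \<alpha>\<^sup>2"
    using True by (simp add: lk_integrand_def diff_diff_add)
  also have "\<dots> \<le> (\<beta>\<^sup>2/2 + \<bar>\<beta>\<bar> + 2) * \<alpha>\<^sup>2"
    by (intro mult_right_mono) auto
  finally show ?thesis using True by (simp add: min_square_1_small)
next
  case False
  have "cmod (lk_integrand \<beta> \<alpha>) \<le> cmod (iexp (\<beta> * \<alpha>)) + 1 + cmod (\<i> * complex_of_real (\<beta> * trunc \<alpha>))"
    unfolding lk_integrand_def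
    by (metis norm_one norm_triangle_ineq4 add_right_mono order_trans)
  also have "\<dots> \<le> 2 + \<bar>\<beta>\<bar>"
    using abs_trunc_le_1[of \<alpha>] by (simp add: norm_mult abs_mult mult_left_le)
  also have "\<dots> \<le> \<beta>\<^sup>2/2 + \<bar>\<beta>\<bar> + 2" by simp
  finally show ?thesis using False by (simp add: min_square_1_large)
qed

lemma Re_lk_integrand: "Re (lk_integrand \<beta> \<alpha>) = cos (\<beta> * \<alpha>) - 1"
  by (simp add: lk_integrand_def Re_exp)

lemma Im_lk_integrand: "Im (lk_integrand \<beta> \<alpha>) = sin (\<beta> * \<alpha>) - \<beta> * trunc \<alpha>"
  by (simp add: lk_integrand_def Im_exp)

lemma lk_integrand_diff:
  "lk_integrand v \<alpha> - lk_integrand (v + u) \<alpha>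
     = iexp (v * \<alpha>) * (1 - iexp (u * \<alpha>)) + \<i> * complex_of_real (u * trunc \<alpha>)"
  by (simp add: lk_integrand_def distrib_right exp_add algebra_simps)

locale levy_measure =
  fixes lam :: "real measure"
  assumes sets_lam [measurable_cong]: "sets lam = sets borel"
    and integrable_min_square: "integrable lam (\<lambda>\<alpha>. min (\<alpha>\<^sup>2) 1)"
begin

lemma integrable_lk_integrand: "complex_integrable lam (lk_integrand \<beta>)"
proof (rule Bochner_Integration.integrable_bound)
  show "integrable lam (\<lambda>\<alpha>. (\<beta>\<^sup>2/2 + \<bar>\<beta>\<bar> + 2) * min (\<alpha>\<^sup>2) 1)"
    using integrable_min_square by simp
  show "AE \<alpha> in lam. norm (lk_integrand \<beta> \<alpha>) \<le> norm ((\<beta>\<^sup>2/2 + \<bar>\<beta>\<bar> + 2) * min (\<alpha>\<^sup>2) 1)"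
    by (intro AE_I2 order_trans[OF norm_lk_integrand_le]) simp
qed measurable

lemma Re_lk_exponent_nonpos:
  assumes "0 \<le> q" shows "Re (lk_exponent b q lam \<beta>) \<le> 0"
proof -
  have "Re (CLINT \<alpha>|lam. lk_integrand \<beta> \<alpha>) = (\<integral>\<alpha>. cos (\<beta> * \<alpha>) - 1 \<partial>lam)"
    using integral_Re[OF integrable_lk_integrand] by (simp add: Re_lk_integrand)
  also have "\<dots> = - (\<integral>\<alpha>. 1 - cos (\<beta> * \<alpha>) \<partial>lam)"
    by (simp flip: Bochner_Integration.integral_minus)
  also have "\<dots> \<le> 0"
    by simp
  finally have "Re (CLINT \<alpha>|lam. lk_integrand \<beta> \<alpha>) \<le> 0" .
  moreover have "0 \<le> q * \<beta>\<^sup>2" using assms by simp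
  ultimately show ?thesis by (simp add: lk_exponent_def)
qed

lemma Im_lk_exponent_1:
  "Im (lk_exponent b q lam 1) = b + (\<integral>\<alpha>. sin \<alpha> - trunc \<alpha> \<partial>lam)"
  using integral_Im[OF integrable_lk_integrand, of 1] by (simp add: lk_exponent_def Im_lk_integrand)

lemma isCont_lk_exponent: "isCont (lk_exponent b q lam) \<beta>"
  unfolding continuous_at_sequentially
proof safe
  fix X :: "nat \<Rightarrow> real" assume X: "X \<longlonglongrightarrow> \<beta>"
  then obtain B where B: "\<And>j. \<bar>X j\<bar> \<le> B"
    using convergent_imp_Bseq[OF convergentI[OF X]] unfolding Bseq_def by auto
  have "(\<lambda>j. CLINT \<alpha>|lam. lk_integrand (X j) \<alpha>) \<longlonglongrightarrow> (CLINT \<alpha>|lam. lk_integrand \<beta> \<alpha>)"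
  proof (rule integral_dominated_convergence[where w="\<lambda>\<alpha>. (B\<^sup>2/2 + B + 2) * min (\<alpha>\<^sup>2) 1"])
    show "integrable lam (\<lambda>\<alpha>. (B\<^sup>2/2 + B + 2) * min (\<alpha>\<^sup>2) 1)"
      using integrable_min_square by simp
    show "AE \<alpha> in lam. (\<lambda>j. lk_integrand (X j) \<alpha>) \<longlonglongrightarrow> lk_integrand \<beta> \<alpha>"
      unfolding lk_integrand_def by (intro AE_I2 tendsto_intros X)
    show "AE \<alpha> in lam. norm (lk_integrand (X j) \<alpha>) \<le> (B\<^sup>2/2 + B + 2) * min (\<alpha>\<^sup>2) 1" for j
    proof (intro AE_I2 order_trans[OF norm_lk_integrand_le] mult_right_mono)
      have "(X j)\<^sup>2 \<le> B\<^sup>2" using B[of j] power_mono[of "\<bar>X j\<bar>" B 2] by simp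
      then show "(X j)\<^sup>2/2 + \<bar>X j\<bar> + 2 \<le> B\<^sup>2/2 + B + 2" using B[of j] by simp
    qed simp
  qed measurable
  then show "(lk_exponent b q lam \<circ> X) \<longlonglongrightarrow> lk_exponent b q lam \<beta>"
    unfolding lk_exponent_def comp_def by (intro tendsto_intros X) auto
qed

lemma borel_measurable_lk_exponent [measurable]: "lk_exponent b q lam \<in> borel_measurable borel"
  by (intro borel_measurable_continuous_onI continuous_at_imp_continuous_on ballI isCont_lk_exponent)

lemma integrable_one_minus_sinc: "integrable lam one_minus_sinc"
proof (rule Bochner_Integration.integrable_bound)
  show "integrable lam (\<lambda>\<alpha>. 2 * min (\<alpha>\<^sup>2) 1)" using integrable_min_square by simp
  show "AE \<alpha> in lam. norm (one_minus_sinc \<alpha>) \<le> norm (2 * min (\<alpha>\<^sup>2) 1)"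
    using one_minus_sinc_le one_minus_sinc_nonneg by (auto intro!: AE_I2)
qed measurable

end

section \<open>Characteristic functions of a Levy process\<close>

lemma (in prob_space) norm_integral_iexp_sub_1_le:
  assumes Y [measurable]: "Y \<in> borel_measurable M" and "0 \<le> e"
  shows "cmod ((CLINT \<omega>|M. iexp (\<beta> * Y \<omega>)) - 1)
           \<le> \<bar>\<beta>\<bar> * e + 2 * prob {\<omega> \<in> space M. e < \<bar>Y \<omega>\<bar>}"
proof -
  let ?A = "{\<omega> \<in> space M. e < \<bar>Y \<omega>\<bar>}"
  have bounded: "cmod (iexp x - 1) \<le> 2" for x :: real
    by (rule order_trans[OF norm_triangle_ineq4]) simp
  have "(CLINT \<omega>|M. iexp (\<beta> * Y \<omega>)) - 1 = (CLINT \<omega>|M. iexp (\<beta> * Y \<omega>) - 1)"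
    by (simp add: prob_space integrable_const_bound[where B=1] del: of_real_mult)
  also have "cmod \<dots> \<le> (\<integral>\<omega>. cmod (iexp (\<beta> * Y \<omega>) - 1) \<partial>M)"
    by (rule integral_norm_bound)
  also have "\<dots> \<le> (\<integral>\<omega>. \<bar>\<beta>\<bar> * e + 2 * indicator ?A \<omega> \<partial>M)"
  proof (rule integral_mono)
    show "integrable M (\<lambda>\<omega>. \<bar>\<beta>\<bar> * e + 2 * indicator ?A \<omega>)"
      by (simp add: emeasure_eq_measure)
    show "cmod (iexp (\<beta> * Y \<omega>) - 1) \<le> \<bar>\<beta>\<bar> * e + 2 * indicator ?A \<omega>"
      if "\<omega> \<in> space M" for \<omega>
    proof (cases "e < \<bar>Y \<omega>\<bar>")
      case True
      then show ?thesis using that bounded[of "\<beta> * Y \<omega>"] \<open>0 \<le> e\<close> by (simp add: add_increasing)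
    next
      case False
      have "cmod (iexp (\<beta> * Y \<omega>) - 1) \<le> \<bar>\<beta> * Y \<omega>\<bar>"
        using iexp_approx1[of "\<beta> * Y \<omega>" 0] by simp
      also have "\<dots> \<le> \<bar>\<beta>\<bar> * e"
        using False by (simp add: abs_mult mult_left_mono)
      finally show ?thesis using False by simp
    qed
  qed (simp add: integrable_const_bound[where B=2] bounded del: of_real_mult)
  also have "\<dots> = \<bar>\<beta>\<bar> * e + 2 * prob ?A"
  proof -
    have "?A \<in> events" by measurable
    then show ?thesis
      by (subst Bochner_Integration.integral_add)
        (auto simp: prob_space emeasure_eq_measure Int_absorb2[OF sets.sets_into_space])
  qed
  finally show ?thesis .
qed

locale levy =
  fixes M :: "'a measure" and L :: "real \<Rightarrow> 'a \<Rightarrow> real"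
  assumes levy_process: "levy_process M L"
begin

sublocale prob_space M
  using levy_process unfolding levy_process_def by blast

lemma borel_measurable_L [measurable]: "0 \<le> t \<Longrightarrow> L t \<in> borel_measurable M"
  using levy_process unfolding levy_process_def by blast

lemma indep_increments:
  "0 \<le> u 0 \<Longrightarrow> (\<forall>i<n. u i < u (Suc i)) \<Longrightarrow>
     indep_vars (\<lambda>_. borel) (\<lambda>i \<omega>. L (u (Suc i)) \<omega> - L (u i) \<omega>) {..<n}"
  using levy_process unfolding levy_process_def by blast

lemma stationary_increments:
  "0 \<le> s \<Longrightarrow> s \<le> t \<Longrightarrow> distr M borel (\<lambda>\<omega>. L t \<omega> - L s \<omega>) = distr M borel (L (t - s))"
  using levy_process unfolding levy_process_def by blast

lemma stochastically_continuous_0: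
  assumes "0 < e"
  shows "((\<lambda>h. prob {\<omega> \<in> space M. e < \<bar>L h \<omega> - L 0 \<omega>\<bar>}) \<longlongrightarrow> 0) (at_right 0)"
proof -
  have "((\<lambda>h. prob {\<omega> \<in> space M. e < \<bar>L (0 + h) \<omega> - L 0 \<omega>\<bar>}) \<longlongrightarrow> 0) (at 0 within {-0..})"
    using levy_process assms unfolding levy_process_def by blast
  then show ?thesis by (auto intro: tendsto_within_subset)
qed

definition law :: "real \<Rightarrow> real measure" where
  "law h = distr M borel (L h)"

lemma real_distribution_law: "0 \<le> h \<Longrightarrow> real_distribution (law h)"
  unfolding law_def by (intro real_distribution_distr) simp

lemma integral_increment:
  fixes g :: "real \<Rightarrow> 'b::{banach, second_countable_topology}"
  assumes "0 \<le> s" "s \<le> t" and [measurable]: "g \<in> borel_measurable borel"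
  shows "(\<integral>\<omega>. g (L t \<omega> - L s \<omega>) \<partial>M) = (\<integral>x. g x \<partial>law (t - s))"
  using assms by (simp add: law_def flip: stationary_increments) (simp add: integral_distr)

lemma char_law_increment:
  "0 \<le> s \<Longrightarrow> s \<le> t \<Longrightarrow> char (law (t - s)) \<beta> = (CLINT \<omega>|M. iexp (\<beta> * (L t \<omega> - L s \<omega>)))"
  unfolding char_def by (rule integral_increment[symmetric]) auto

lemma char_law_0 [simp]: "char (law 0) \<beta> = 1"
  using char_law_increment[of 0 0 \<beta>] by (simp add: prob_space)

lemma char_law_telescope:
  assumes "0 \<le> u 0" and inc: "\<forall>i<n. u i < u (Suc i)"
  shows "char (law (u n - u 0)) \<beta> = (\<Prod>i<n. char (law (u (Suc i) - u i)) \<beta>)"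
proof -
  have mono: "u 0 \<le> u i" if "i \<le> n" for i
    using that
  proof (induction i)
    case (Suc i)
    then show ?case using inc[rule_format, of i] by simp
  qed simp
  have "char (law (u n - u 0)) \<beta> = char (distr M borel (\<lambda>\<omega>. L (u n) \<omega> - L (u 0) \<omega>)) \<beta>"
    using assms mono[of n] by (simp add: law_def stationary_increments)
  also have "(\<lambda>\<omega>. L (u n) \<omega> - L (u 0) \<omega>) = (\<lambda>\<omega>. \<Sum>i<n. L (u (Suc i)) \<omega> - L (u i) \<omega>)"
    using sum_lessThan_telescope[of "\<lambda>i. L (u i) \<omega>" n for \<omega>] by simp
  also have "char (distr M borel \<dots>) \<beta>
      = (\<Prod>i<n. char (distr M borel (\<lambda>\<omega>. L (u (Suc i)) \<omega> - L (u i) \<omega>)) \<beta>)"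
    by (rule char_distr_sum[OF indep_increments[OF assms]])
  also have "\<dots> = (\<Prod>i<n. char (law (u (Suc i) - u i)) \<beta>)"
  proof (intro prod.cong refl)
    fix i assume "i \<in> {..<n}"
    then have "0 \<le> u i" "u i \<le> u (Suc i)" using assms mono[of i] by (auto intro: less_imp_le)
    then show "char (distr M borel (\<lambda>\<omega>. L (u (Suc i)) \<omega> - L (u i) \<omega>)) \<beta> = char (law (u (Suc i) - u i)) \<beta>"
      by (simp add: law_def stationary_increments)
  qed
  finally show ?thesis .
qed

lemma char_law_mult_nat: "0 \<le> h \<Longrightarrow> char (law (real n * h)) \<beta> = char (law h) \<beta> ^ n"
proof (cases "h = 0")
  case False
  assume "0 \<le> h"
  then show ?thesis
    using False char_law_telescope[of "\<lambda>i. real i * h" n \<beta>] by (simp add: distrib_right)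
qed simp

lemma char_law_add:
  assumes "0 \<le> a" "0 \<le> b" shows "char (law (a + b)) \<beta> = char (law a) \<beta> * char (law b) \<beta>"
proof (cases "a = 0 \<or> b = 0")
  case False
  define u :: "nat \<Rightarrow> real" where "u = (\<lambda>i. if i = 0 then 0 else if i = 1 then a else a + b)"
  have "char (law (u 2 - u 0)) \<beta> = (\<Prod>i<2. char (law (u (Suc i) - u i)) \<beta>)"
    using assms False by (intro char_law_telescope) (auto simp: u_def less_2_cases_iff)
  then show ?thesis by (simp add: u_def numeral_2_eq_2 lessThan_Suc)
qed auto

lemma char_law_tendsto_1: "((\<lambda>h. char (law h) \<beta>) \<longlongrightarrow> 1) (at_right 0)"
proof (rule tendstoI)
  fix \<epsilon> :: real assume "0 < \<epsilon>"
  define e where "e = \<epsilon> / (2 * (\<bar>\<beta>\<bar> + 1))"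
  have "0 < e" "\<bar>\<beta>\<bar> * e < \<epsilon> / 2"
    using \<open>0 < \<epsilon>\<close> by (auto simp: e_def field_simps)
  have "\<forall>\<^sub>F h in at_right 0. prob {\<omega> \<in> space M. e < \<bar>L h \<omega> - L 0 \<omega>\<bar>} < \<epsilon> / 4"
    using order_tendstoD(2)[OF stochastically_continuous_0[OF \<open>0 < e\<close>], of "\<epsilon> / 4"] \<open>0 < \<epsilon>\<close>
    by simp
  moreover have "\<forall>\<^sub>F h in at_right 0. 0 < (h::real)"
    by (simp add: eventually_at_right_less)
  ultimately show "\<forall>\<^sub>F h in at_right 0. dist (char (law h) \<beta>) 1 < \<epsilon>"
  proof eventually_elim
    case (elim h)
    have "cmod (char (law h) \<beta> - 1) \<le> \<bar>\<beta>\<bar> * e + 2 * prob {\<omega> \<in> space M. e < \<bar>L h \<omega> - L 0 \<omega>\<bar>}"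
      using norm_integral_iexp_sub_1_le[of "\<lambda>\<omega>. L h \<omega> - L 0 \<omega>" e \<beta>]
        char_law_increment[of 0 h \<beta>] elim \<open>0 < e\<close>
      by simp
    then show ?case using elim \<open>\<bar>\<beta>\<bar> * e < \<epsilon> / 2\<close> by (simp add: dist_norm)
  qed
qed

end

locale levy_with_characteristics = levy +
  fixes b q :: real and lam :: "real measure"
  assumes characteristics: "levy_characteristics M L b q lam"
begin

sublocale levy_measure lam
  using characteristics unfolding levy_characteristics_def by unfold_locales auto

abbreviation psi :: "real \<Rightarrow> complex" where
  "psi \<equiv> lk_exponent b q lam"

lemma q_nonneg: "0 \<le> q"
  using characteristics unfolding levy_characteristics_def by blast

lemma char_law_1: "char (law 1) \<beta> = exp (psi \<beta>)"
  using characteristics unfolding levy_characteristics_def law_def lk_exponent_def lk_integrand_def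
  by blast

text \<open>The quotient below is continuous with values among the \<open>n\<close>-th roots of unity, hence
  constant, and it equals 1 at 0.\<close>

lemma char_law_inverse_nat:
  assumes "1 \<le> n" shows "char (law (1 / real n)) \<beta> = exp (psi \<beta> / of_nat n)"
proof -
  define g where "g \<beta> = char (law (1 / real n)) \<beta> * exp (- psi \<beta> / of_nat n)" for \<beta>
  have "continuous_on UNIV g"
    unfolding g_def by (intro continuous_at_imp_continuous_on ballI continuous_intros
        real_distribution.isCont_char real_distribution_law isCont_lk_exponent) (use assms in simp_all)
  moreover have "g \<beta> ^ n = 1" for \<beta>
  proof -
    have "char (law (1 / real n)) \<beta> ^ n = exp (psi \<beta>)"
      using char_law_mult_nat[of "1 / real n" n \<beta>] assms by (simp add: char_law_1)
    moreover have "exp (- psi \<beta> / of_nat n) ^ n = exp (- psi \<beta>)"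
      using exp_of_nat_mult[of n "- psi \<beta> / of_nat n"] assms by simp
    ultimately show ?thesis by (simp add: g_def power_mult_distrib exp_minus)
  qed
  then have "finite (range g)"
    by (intro finite_subset[OF _ finite_roots_unity[OF assms]]) auto
  ultimately have "g constant_on UNIV"
    by (intro continuous_finite_range_constant) auto
  then have "g \<beta> = g 0" by (auto simp: constant_on_def)
  also have "g 0 = 1"
    using real_distribution.char_zero[OF real_distribution_law] by (simp add: g_def)
  finally show ?thesis by (simp add: g_def exp_minus field_simps)
qed

lemma char_law_rat:
  assumes "1 \<le> n" shows "char (law (real k / real n)) \<beta> = exp (of_real (real k / real n) * psi \<beta>)"
proof -
  have "char (law (real k / real n)) \<beta> = char (law (1 / real n)) \<beta> ^ k"
    using char_law_mult_nat[of "1 / real n" k \<beta>] by simp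
  also have "\<dots> = exp (of_nat k * (psi \<beta> / of_nat n))"
    by (simp only: char_law_inverse_nat[OF assms] exp_of_nat_mult)
  finally show ?thesis by (simp add: field_simps)
qed

lemma nat_ratio_tendsto_from_below:
  fixes h :: real assumes "0 < h"
  obtains c :: "nat \<Rightarrow> nat"
  where "\<And>j. real (c j) / real (Suc j) < h" "(\<lambda>j. h - real (c j) / real (Suc j)) \<longlonglongrightarrow> 0"
proof -
  define c where "c j = nat (\<lceil>real (Suc j) * h\<rceil> - 1)" for j
  have c: "real (c j) < real (Suc j) * h" "real (Suc j) * h - 1 \<le> real (c j)" for j
  proof -
    have "real_of_int \<lceil>real (Suc j) * h\<rceil> - 1 < real (Suc j) * h"
      "real (Suc j) * h - 1 \<le> real_of_int \<lceil>real (Suc j) * h\<rceil> - 1"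
      "0 \<le> \<lceil>real (Suc j) * h\<rceil> - 1"
      using ceiling_correct[of "real (Suc j) * h"] \<open>0 < h\<close> by auto
    then show "real (c j) < real (Suc j) * h" "real (Suc j) * h - 1 \<le> real (c j)"
      by (simp_all add: c_def)
  qed
  have below: "real (c j) / real (Suc j) < h" for j
    using c(1)[of j] by (simp add: divide_less_eq mult.commute)
  have upper: "h - real (c j) / real (Suc j) \<le> 1 / real (Suc j)" for j
  proof -
    have "h - real (c j) / real (Suc j) = (real (Suc j) * h - real (c j)) / real (Suc j)"
      by (simp add: field_simps)
    also have "\<dots> \<le> 1 / real (Suc j)"
      using c(2)[of j] by (intro divide_right_mono) auto
    finally show ?thesis .
  qed
  have lower: "0 \<le> h - real (c j) / real (Suc j)" for j
    using below[of j] by linarith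
  have inverse: "(\<lambda>j. 1 / real (Suc j)) \<longlonglongrightarrow> 0"
    using LIMSEQ_inverse_real_of_nat by (simp add: inverse_eq_divide)
  have "(\<lambda>j. h - real (c j) / real (Suc j)) \<longlonglongrightarrow> 0"
    by (rule tendsto_sandwich[OF _ _ tendsto_const inverse]) (intro always_eventually allI lower upper)+
  with below show thesis by (rule that)
qed

text \<open>Approximate \<open>h\<close> from below by rationals \<open>r j\<close> and use right continuity of the
  characteristic function in time at 0.\<close>

lemma char_law: assumes "0 \<le> h" shows "char (law h) \<beta> = exp (of_real h * psi \<beta>)"
proof (cases "h = 0")
  case False
  then have "0 < h" using assms by simp
  obtain c where below: "\<And>j. real (c j) / real (Suc j) < h"
    and gap: "(\<lambda>j. h - real (c j) / real (Suc j)) \<longlonglongrightarrow> 0"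
    using nat_ratio_tendsto_from_below[OF \<open>0 < h\<close>] by blast
  define r where "r j = real (c j) / real (Suc j)" for j
  have "filterlim (\<lambda>j. h - r j) (at_right 0) sequentially"
    using gap below by (intro tendsto_imp_filterlim_at_right) (auto simp: r_def)
  then have "(\<lambda>j. exp (of_real (r j) * psi \<beta>) * char (law (h - r j)) \<beta>)
      \<longlonglongrightarrow> exp (of_real h * psi \<beta>) * 1"
    using gap
    by (intro tendsto_intros filterlim_compose[OF char_law_tendsto_1])
      (auto simp: r_def dest: tendsto_diff[OF tendsto_const[of h]])
  moreover have "char (law h) \<beta> = exp (of_real (r j) * psi \<beta>) * char (law (h - r j)) \<beta>" for j
    using char_law_add[of "r j" "h - r j" \<beta>] below[of j] char_law_rat[of "Suc j" "c j" \<beta>]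
    by (simp add: r_def)
  ultimately show ?thesis by (simp add: LIMSEQ_const_iff)
qed simp

end

section \<open>The kernel measure\<close>

lemma integral_one_minus_iexp:
  assumes "x \<noteq> 0"
  shows "(CLBINT t:{-1..1}. 1 - iexp (t * x)) = 2 * complex_of_real (one_minus_sinc x)"
proof -
  define G where "G z = z + \<i> * exp (\<i> * z * complex_of_real x) / complex_of_real x" for z
  have "(G has_field_derivative 1 - exp (\<i> * z * complex_of_real x)) (at z)" for z
    unfolding G_def using assms by (auto intro!: derivative_eq_intros simp: field_simps)
  then have "((\<lambda>t. G (complex_of_real t)) has_vector_derivative 1 - iexp (t * x)) (at t within S)"
    for t S
    using has_vector_derivative_real_field by (fastforce simp: mult.assoc)
  moreover have "continuous_on {-1..1} (\<lambda>t. 1 - iexp (t * x))"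
    by (intro continuous_intros)
  ultimately have "(CLBINT t=ereal (-1)..ereal 1. 1 - iexp (t * x)) = G 1 - G (-1)"
    using interval_integral_FTC_finite[where F="\<lambda>t. G (complex_of_real t)" and a="-1" and b=1
        and f="\<lambda>t. 1 - iexp (t * x)"]
    by simp
  also have "\<dots> = 2 + \<i> * (iexp x - iexp (- x)) / complex_of_real x"
    by (simp add: G_def diff_divide_distrib algebra_simps)
  also have "iexp x - iexp (- x) = 2 * \<i> * complex_of_real (sin x)"
    by (simp add: complex_eq_iff Re_exp Im_exp)
  also have "2 + \<i> * (2 * \<i> * complex_of_real (sin x)) / complex_of_real x
      = 2 * complex_of_real (one_minus_sinc x)"
    using assms by (simp add: one_minus_sinc_def field_simps)
  finally show ?thesis by (subst (asm) interval_integral_Icc) auto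
qed

lemma set_integral_Icc_integral_swap:
  fixes F :: "real \<Rightarrow> real \<Rightarrow> 'b::{banach, second_countable_topology}"
  assumes "finite_measure N" and sets_N [measurable_cong]: "sets N = sets borel"
    and [measurable]: "(\<lambda>p. F (fst p) (snd p)) \<in> borel_measurable (borel \<Otimes>\<^sub>M borel)"
    and bounded: "\<And>x u. u \<in> {a..b} \<Longrightarrow> norm (F x u) \<le> B"
  shows "(LBINT u:{a..b}. (\<integral>x. F x u \<partial>N)) = (\<integral>x. (LBINT u:{a..b}. F x u) \<partial>N)"
proof -
  interpret N: finite_measure N by fact
  interpret pair_sigma_finite N lborel ..
  have [measurable_cong]: "sets (N \<Otimes>\<^sub>M lborel) = sets (borel \<Otimes>\<^sub>M borel)"
    by (intro sets_pair_measure_cong) (simp_all add: sets_N)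
  have "integrable (N \<Otimes>\<^sub>M lborel) (\<lambda>p. indicator (space N \<times> {a..b}) p *\<^sub>R F (fst p) (snd p))"
  proof (rule integrableI_bounded_set_indicator[where B=B])
    show "emeasure (N \<Otimes>\<^sub>M lborel) (space N \<times> {a..b}) < \<infinity>"
      by (simp add: lborel.emeasure_pair_measure_Times ennreal_mult_less_top less_top[symmetric]
          ennreal_mult_eq_top_iff N.emeasure_finite emeasure_lborel_Icc_eq)
  qed (use bounded in \<open>auto intro!: AE_I2\<close>)
  then have "(\<integral>u. (\<integral>x. indicator (space N \<times> {a..b}) (x, u) *\<^sub>R F x u \<partial>N) \<partial>lborel)
      = (\<integral>x. (\<integral>u. indicator (space N \<times> {a..b}) (x, u) *\<^sub>R F x u \<partial>lborel) \<partial>N)"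
    by (intro Fubini_integral) (simp add: case_prod_beta')
  moreover have "space N = UNIV" using sets_eq_imp_space_eq[OF sets_N] by simp
  ultimately show ?thesis
    by (simp add: set_lebesgue_integral_def indicator_times)
qed

lemma set_integral_char_diff:
  assumes "real_distribution P"
  shows "(CLBINT u:{-1..1}. char P v - char P (v + u))
    = 2 * (CLINT x|P. complex_of_real (one_minus_sinc x) * iexp (v * x))"
proof -
  interpret P: real_distribution P by fact
  have "(CLBINT u:{-1..1}. char P v - char P (v + u))
      = (CLBINT u:{-1..1}. (CLINT x|P. iexp (v * x) - iexp ((v + u) * x)))"
    unfolding char_def
    by (intro set_lebesgue_integral_cong) (auto simp: P.integrable_const_bound[where B=1])
  also have "\<dots> = (CLINT x|P. (CLBINT u:{-1..1}. iexp (v * x) - iexp ((v + u) * x)))"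
    by (rule set_integral_Icc_integral_swap[where B=2])
      (auto intro: order_trans[OF norm_triangle_ineq4] simp del: of_real_mult)
  also have "\<dots> = (CLINT x|P. 2 * (complex_of_real (one_minus_sinc x) * iexp (v * x)))"
  proof (intro Bochner_Integration.integral_cong refl)
    fix x
    have "(CLBINT u:{-1..1}. iexp (v * x) - iexp ((v + u) * x))
        = iexp (v * x) * (CLBINT u:{-1..1}. 1 - iexp (u * x))"
      by (simp add: distrib_right exp_add algebra_simps flip: set_integral_mult_right)
    then show "(CLBINT u:{-1..1}. iexp (v * x) - iexp ((v + u) * x))
        = 2 * (complex_of_real (one_minus_sinc x) * iexp (v * x))"
      using integral_one_minus_iexp[of x] by (cases "x = 0") (simp_all add: one_minus_sinc_def)
  qed
  finally show ?thesis by simp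
qed

definition add_point_mass :: "real measure \<Rightarrow> real \<Rightarrow> real measure" where
  "add_point_mass A a = measure_of UNIV (sets borel) (\<lambda>X. emeasure A X + ennreal a * indicator X 0)"

lemma sets_add_point_mass [simp, measurable_cong]: "sets (add_point_mass A a) = sets borel"
  unfolding add_point_mass_def using sets.sigma_sets_eq[of borel] by (subst sets_measure_of) auto

lemma space_add_point_mass [simp]: "space (add_point_mass A a) = UNIV"
  using sets_eq_imp_space_eq[OF sets_add_point_mass] by simp

lemma emeasure_add_point_mass:
  assumes A: "sets A = sets borel" and X: "X \<in> sets borel"
  shows "emeasure (add_point_mass A a) X = emeasure A X + ennreal a * indicator X 0"
  unfolding add_point_mass_def
proof (rule emeasure_measure_of_sigma[OF _ _ _ X])
  show "sigma_algebra UNIV (sets borel)"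
    using sets.sigma_algebra_axioms[of borel] by simp
  show "positive (sets borel) (\<lambda>X. emeasure A X + ennreal a * indicator X 0)"
    by (simp add: positive_def)
  show "countably_additive (sets borel) (\<lambda>X. emeasure A X + ennreal a * indicator X 0)"
  proof (rule countably_additiveI)
    fix F :: "nat \<Rightarrow> real set" assume "range F \<subseteq> sets borel" "disjoint_family F"
    then show "(\<Sum>i. emeasure A (F i) + ennreal a * indicator (F i) 0)
        = emeasure A (\<Union>i. F i) + ennreal a * indicator (\<Union>i. F i) 0"
      using A by (simp add: suminf_add[symmetric] suminf_emeasure ennreal_suminf_cmult suminf_indicator)
  qed
qed

lemma finite_measure_add_point_mass:
  assumes "finite_measure A" "sets A = sets borel"
  shows "finite_measure (add_point_mass A a)"
proof
  interpret A: finite_measure A by fact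
  show "emeasure (add_point_mass A a) (space (add_point_mass A a)) \<noteq> \<infinity>"
    using emeasure_add_point_mass[OF assms(2), of UNIV a] A.emeasure_finite[of UNIV]
    by (simp add: ennreal_mult_eq_top_iff)
qed

lemma density_add_point_mass_off_0:
  assumes A: "sets A = sets borel" "emeasure A {0} = 0"
  shows "density (add_point_mass A a) (indicator (-{0})) = A"
proof (rule measure_eqI)
  fix X assume "X \<in> sets (density (add_point_mass A a) (indicator (-{0})))"
  then have X: "X \<in> sets borel" by simp
  have "emeasure (density (add_point_mass A a) (indicator (-{0}))) X = emeasure (add_point_mass A a) (-{0} \<inter> X)"
    using X by (simp add: emeasure_restricted)
  also have "\<dots> = emeasure A (X - {0})"
    using A(1) X by (simp add: emeasure_add_point_mass Diff_eq Int_commute)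
  also have "\<dots> = emeasure A X"
    using A X by (intro emeasure_Diff_null_set) (auto simp: null_sets_def)
  finally show "emeasure (density (add_point_mass A a) (indicator (-{0}))) X = emeasure A X" .
qed (use A in simp)

lemma density_add_point_mass_at_0:
  assumes A: "sets A = sets borel" "emeasure A {0} = 0"
  shows "density (add_point_mass A a) (indicator {0}) = density (return borel 0) (\<lambda>_. ennreal a)"
proof (rule measure_eqI)
  fix X assume "X \<in> sets (density (add_point_mass A a) (indicator {0}))"
  then have X: "X \<in> sets borel" by simp
  have "emeasure (density (add_point_mass A a) (indicator {0})) X = emeasure (add_point_mass A a) ({0} \<inter> X)"
    using X by (simp add: emeasure_restricted)
  also have "\<dots> = emeasure A ({0} \<inter> X) + ennreal a * indicator X 0"
    using A(1) X by (simp add: emeasure_add_point_mass split: split_indicator)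
  also have "emeasure A ({0} \<inter> X) = 0"
    using emeasure_mono[of "{0} \<inter> X" "{0}" A] A by simp
  finally show "emeasure (density (add_point_mass A a) (indicator {0})) X
      = emeasure (density (return borel 0) (\<lambda>_. ennreal a)) X"
    using X by (simp add: emeasure_density_const)
qed simp

lemma integral_add_point_mass:
  fixes f :: "real \<Rightarrow> 'b::{banach, second_countable_topology}"
  assumes A: "finite_measure A" "sets A = sets borel" "emeasure A {0} = 0" and "0 \<le> a"
    and f [measurable]: "f \<in> borel_measurable borel" and bounded: "\<And>x. norm (f x) \<le> B"
  shows "integral\<^sup>L (add_point_mass A a) f = integral\<^sup>L A f + a *\<^sub>R f 0"
proof -
  let ?R = "add_point_mass A a"
  interpret R: finite_measure ?R by (rule finite_measure_add_point_mass[OF A(1,2)])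
  have borel_0: "-{0::real} \<in> sets borel" "{0::real} \<in> sets borel" by auto
  have integrable: "integrable ?R f"
    using bounded by (intro R.integrable_const_bound[where B=B]) auto
  have "integral\<^sup>L ?R f = integral\<^sup>L ?R (\<lambda>x. indicator (-{0}) x *\<^sub>R f x + indicator {0} x *\<^sub>R f x)"
    by (intro Bochner_Integration.integral_cong) (auto split: split_indicator)
  also have "\<dots> = integral\<^sup>L ?R (\<lambda>x. indicator (-{0}) x *\<^sub>R f x) + integral\<^sup>L ?R (\<lambda>x. indicator {0} x *\<^sub>R f x)"
    using borel_0 by (intro Bochner_Integration.integral_add integrable_mult_indicator integrable) auto
  also have "integral\<^sup>L ?R (\<lambda>x. indicator (-{0}) x *\<^sub>R f x)
      = integral\<^sup>L (density ?R (\<lambda>x. ennreal (indicator (-{0}) x))) f"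
    by (rule integral_density[symmetric]) (use borel_0 in auto)
  also have "\<dots> = integral\<^sup>L A f"
    by (simp add: ennreal_indicator density_add_point_mass_off_0[OF A(2,3)])
  also have "integral\<^sup>L ?R (\<lambda>x. indicator {0} x *\<^sub>R f x)
      = integral\<^sup>L (density ?R (\<lambda>x. ennreal (indicator {0} x))) f"
    by (rule integral_density[symmetric]) (use borel_0 in auto)
  also have "\<dots> = (\<integral>x. a *\<^sub>R f x \<partial>return borel 0)"
    using \<open>0 \<le> a\<close> by (simp add: ennreal_indicator density_add_point_mass_at_0[OF A(2,3)] integral_density)
  finally show ?thesis by (simp add: integral_return)
qed

text \<open>The atom comes from the
  Gaussian part: \<open>q (v u + u\<^sup>2 / 2)\<close> averages to \<open>q / 6\<close> over \<open>u \<in> [-1, 1]\<close>.\<close>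

definition lk_kernel_measure :: "real \<Rightarrow> real measure \<Rightarrow> real measure" where
  "lk_kernel_measure q lam = add_point_mass (density lam (\<lambda>x. ennreal (one_minus_sinc x))) (q / 6)"

lemma sets_lk_kernel_measure [simp, measurable_cong]: "sets (lk_kernel_measure q lam) = sets borel"
  by (simp add: lk_kernel_measure_def)

lemma set_integral_Icc_power: "(LBINT u:{-1..1::real}. u ^ k) = (1 - (-1) ^ Suc k) / Suc k"
  unfolding set_lebesgue_integral_def using integral_power[of "-1" 1 k] by (simp add: mult.commute)

lemma set_integral_lk_integrand_diff:
  "(CLBINT u:{-1..1}. lk_integrand v \<alpha> - lk_integrand (v + u) \<alpha>)
     = 2 * (complex_of_real (one_minus_sinc \<alpha>) * iexp (v * \<alpha>))"
proof (cases "\<alpha> = 0")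
  case False
  have "(CLBINT u:{-1..1}. lk_integrand v \<alpha> - lk_integrand (v + u) \<alpha>)
      = (CLBINT u:{-1..1}. iexp (v * \<alpha>) * (1 - iexp (u * \<alpha>)))
        + (CLBINT u:{-1..1}. \<i> * complex_of_real (u * trunc \<alpha>))"
    unfolding lk_integrand_diff
    by (intro set_integral_add borel_integrable_atLeastAtMost' continuous_intros)
  also have "(CLBINT u:{-1..1}. \<i> * complex_of_real (u * trunc \<alpha>)) = 0"
    using set_integral_Icc_power[of 1] by (simp add: set_integral_complex_of_real)
  finally show ?thesis
    using integral_one_minus_iexp[OF False] by simp
qed simp

lemma norm_lk_integrand_diff_div_le:
  assumes "\<bar>u\<bar> \<le> 1"
  shows "cmod ((lk_integrand v \<alpha> - lk_integrand (v + u) \<alpha>) / complex_of_real (one_minus_sinc \<alpha>))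
    \<le> 15 * ((\<bar>v\<bar> + 1)\<^sup>2/2 + (\<bar>v\<bar> + 1) + 2)"
proof (cases "\<alpha> = 0")
  case False
  let ?C = "(\<bar>v\<bar> + 1)\<^sup>2/2 + (\<bar>v\<bar> + 1) + 2"
  have coeff: "\<beta>\<^sup>2/2 + \<bar>\<beta>\<bar> + 2 \<le> ?C" if "\<bar>\<beta>\<bar> \<le> \<bar>v\<bar> + 1" for \<beta>
    using that power_mono[OF that abs_ge_zero, of 2] by simp
  have "cmod (lk_integrand v \<alpha> - lk_integrand (v + u) \<alpha>)
      \<le> cmod (lk_integrand v \<alpha>) + cmod (lk_integrand (v + u) \<alpha>)"
    by (rule norm_triangle_ineq4)
  also have "\<dots> \<le> ?C * min (\<alpha>\<^sup>2) 1 + ?C * min (\<alpha>\<^sup>2) 1"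
    using assms abs_triangle_ineq[of v u]
    by (intro add_mono order_trans[OF norm_lk_integrand_le] mult_right_mono coeff) auto
  also have "\<dots> = ?C * (2 * min (\<alpha>\<^sup>2) 1)"
    by simp
  also have "\<dots> \<le> ?C * (15 * one_minus_sinc \<alpha>)"
    using one_minus_sinc_ge[of \<alpha>] by (intro mult_left_mono) auto
  finally show ?thesis
    using one_minus_sinc_pos[OF False] by (simp add: norm_divide divide_le_eq algebra_simps)
qed simp

context levy_measure
begin

lemma finite_measure_density_one_minus_sinc:
  "finite_measure (density lam (\<lambda>x. ennreal (one_minus_sinc x)))"
proof
  have "emeasure (density lam (\<lambda>x. ennreal (one_minus_sinc x))) (space lam)
      = (\<integral>\<^sup>+ x. ennreal (one_minus_sinc x) * indicator (space lam) x \<partial>lam)"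
    by (rule emeasure_density) auto
  also have "\<dots> = (\<integral>\<^sup>+ x. ennreal (norm (one_minus_sinc x)) \<partial>lam)"
    by (intro nn_integral_cong) (simp add: one_minus_sinc_nonneg)
  also have "\<dots> < \<infinity>"
    using integrableD(2)[OF integrable_one_minus_sinc] by (simp add: less_top one_minus_sinc_nonneg)
  finally show "emeasure (density lam (\<lambda>x. ennreal (one_minus_sinc x)))
      (space (density lam (\<lambda>x. ennreal (one_minus_sinc x)))) \<noteq> \<infinity>"
    by simp
qed

lemma finite_measure_lk_kernel_measure: "finite_measure (lk_kernel_measure q lam)"
  unfolding lk_kernel_measure_def
  by (intro finite_measure_add_point_mass finite_measure_density_one_minus_sinc) (simp add: sets_lam)

lemma integral_lk_kernel_measure:
  fixes g :: "real \<Rightarrow> 'b::{banach, second_countable_topology}"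
  assumes "0 \<le> q" "g \<in> borel_measurable borel" "\<And>x. norm (g x) \<le> B"
  shows "integral\<^sup>L (lk_kernel_measure q lam) g = (\<integral>x. one_minus_sinc x *\<^sub>R g x \<partial>lam) + (q / 6) *\<^sub>R g 0"
proof -
  have "emeasure (density lam (\<lambda>x. ennreal (one_minus_sinc x))) {0}
      = (\<integral>\<^sup>+ x. ennreal (one_minus_sinc x) * indicator {0} x \<partial>lam)"
    by (rule emeasure_density) (auto simp: sets_lam)
  also have "\<dots> = 0"
    by (simp add: nn_integral_0_iff_AE one_minus_sinc_def split: split_indicator)
  finally show ?thesis
    unfolding lk_kernel_measure_def using assms
    by (subst integral_add_point_mass[OF finite_measure_density_one_minus_sinc])
      (auto simp: sets_lam integral_density one_minus_sinc_nonneg)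
qed

lemma char_lk_kernel_measure:
  assumes "0 \<le> q"
  shows "char (lk_kernel_measure q lam) v
    = (CLINT x|lam. complex_of_real (one_minus_sinc x) * iexp (v * x)) + complex_of_real (q / 6)"
  unfolding char_def using assms
  by (subst integral_lk_kernel_measure[where B=1]) (auto simp: scaleR_conv_of_real)

text \<open>Fubini is applied to the finite measure \<open>(1 - sin \<alpha> / \<alpha>) \<lambda>(d\<alpha>)\<close>, against which the
  integrand divided by \<open>1 - sin \<alpha> / \<alpha>\<close> is bounded; \<open>\<lambda>\<close> itself need not be \<open>\<sigma>\<close>-finite.\<close>

lemma set_integral_integral_lk_integrand_diff:
  "(CLBINT u:{-1..1}. (CLINT \<alpha>|lam. lk_integrand v \<alpha>) - (CLINT \<alpha>|lam. lk_integrand (v + u) \<alpha>))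
     = 2 * (CLINT \<alpha>|lam. complex_of_real (one_minus_sinc \<alpha>) * iexp (v * \<alpha>))"
proof -
  let ?K = "density lam (\<lambda>x. ennreal (one_minus_sinc x))"
  define F where "F \<alpha> u = (lk_integrand v \<alpha> - lk_integrand (v + u) \<alpha>) / complex_of_real (one_minus_sinc \<alpha>)"
    for \<alpha> u
  have cancel: "one_minus_sinc \<alpha> *\<^sub>R (X / complex_of_real (one_minus_sinc \<alpha>)) = X"
    if "\<alpha> = 0 \<Longrightarrow> X = 0" for \<alpha> X
    using that one_minus_sinc_pos[of \<alpha>] by (cases "\<alpha> = 0") (simp_all add: scaleR_conv_of_real)
  have "(CLINT \<alpha>|lam. lk_integrand v \<alpha>) - (CLINT \<alpha>|lam. lk_integrand (v + u) \<alpha>)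
      = (CLINT \<alpha>|lam. one_minus_sinc \<alpha> *\<^sub>R F \<alpha> u)" for u
    by (simp add: F_def cancel integrable_lk_integrand flip: Bochner_Integration.integral_diff)
  also have "\<dots> u = (CLINT \<alpha>|?K. F \<alpha> u)" for u
    by (simp add: F_def integral_density one_minus_sinc_nonneg)
  finally have "(CLBINT u:{-1..1}. (CLINT \<alpha>|lam. lk_integrand v \<alpha>) - (CLINT \<alpha>|lam. lk_integrand (v + u) \<alpha>))
      = (CLBINT u:{-1..1}. (CLINT \<alpha>|?K. F \<alpha> u))"
    by simp
  also have "\<dots> = (CLINT \<alpha>|?K. (CLBINT u:{-1..1}. F \<alpha> u))"
  proof (rule set_integral_Icc_integral_swap[OF finite_measure_density_one_minus_sinc])
    show "norm (F \<alpha> u) \<le> 15 * ((\<bar>v\<bar> + 1)\<^sup>2/2 + (\<bar>v\<bar> + 1) + 2)" if "u \<in> {-1..1}" for \<alpha> u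
      unfolding F_def using that by (intro norm_lk_integrand_diff_div_le) auto
  qed (simp_all add: sets_lam F_def)
  also have "\<dots> = (CLINT \<alpha>|?K. 2 * (complex_of_real (one_minus_sinc \<alpha>) * iexp (v * \<alpha>))
      / complex_of_real (one_minus_sinc \<alpha>))"
    by (simp add: F_def set_integral_lk_integrand_diff)
  also have "\<dots> = (CLINT \<alpha>|lam. one_minus_sinc \<alpha> *\<^sub>R
      (2 * (complex_of_real (one_minus_sinc \<alpha>) * iexp (v * \<alpha>)) / complex_of_real (one_minus_sinc \<alpha>)))"
    by (rule integral_density) (auto simp: one_minus_sinc_nonneg)
  also have "\<dots> = (CLINT \<alpha>|lam. 2 * (complex_of_real (one_minus_sinc \<alpha>) * iexp (v * \<alpha>)))"
    by (intro Bochner_Integration.integral_cong refl cancel) simp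
  finally show ?thesis by simp
qed

lemma set_integral_lk_exponent_diff:
  assumes "0 \<le> q"
  shows "(CLBINT u:{-1..1}. lk_exponent b q lam v - lk_exponent b q lam (v + u))
    = 2 * char (lk_kernel_measure q lam) v"
proof -
  let ?I = "\<lambda>\<beta>. CLINT \<alpha>|lam. lk_integrand \<beta> \<alpha>"
  define p where "p u = q * v * u + q / 2 * u\<^sup>2" for u
  define P where "P u = complex_of_real (p u) - \<i> * complex_of_real (b * u)" for u
  have split: "lk_exponent b q lam v - lk_exponent b q lam (v + u) = P u + (?I v - ?I (v + u))" for u
    by (simp add: lk_exponent_def P_def p_def algebra_simps power2_eq_square)
  have p_cont: "continuous_on {-1..1} p"
    unfolding p_def by (intro continuous_intros)
  then have P_cont: "continuous_on {-1..1} P"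
    unfolding P_def by (intro continuous_intros)
  have psi_cont: "continuous_on UNIV (lk_exponent b q lam)"
    by (intro continuous_at_imp_continuous_on ballI isCont_lk_exponent)
  have "continuous_on {-1..1} (\<lambda>u. lk_exponent b q lam v - lk_exponent b q lam (v + u) - P u)"
    by (intro continuous_intros P_cont continuous_on_compose2[OF psi_cont]) auto
  then have I_cont: "continuous_on {-1..1} (\<lambda>u. ?I v - ?I (v + u))"
    by (simp add: split)
  have "(LBINT u:{-1..1}. p u) = q * v * (LBINT u:{-1..1}. u ^ 1) + q / 2 * (LBINT u:{-1..1}. u ^ 2)"
    unfolding p_def by (subst set_integral_add) (auto intro!: borel_integrable_atLeastAtMost' continuous_intros)
  then have p_int: "(LBINT u:{-1..1}. p u) = q / 3"
    using set_integral_Icc_power[of 1] set_integral_Icc_power[of 2] by simp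
  have "(CLBINT u:{-1..1}. P u)
      = complex_of_real (LBINT u:{-1..1}. p u) - \<i> * complex_of_real (b * (LBINT u:{-1..1}. u ^ 1))"
    unfolding P_def using p_cont
    by (subst set_integral_diff) (auto intro!: borel_integrable_atLeastAtMost' continuous_intros
        simp: set_integral_complex_of_real)
  then have "(CLBINT u:{-1..1}. P u) = complex_of_real (q / 3)"
    unfolding p_int using set_integral_Icc_power[of 1] by simp
  then show ?thesis
    using set_integral_integral_lk_integrand_diff[of v] char_lk_kernel_measure[OF assms, of v]
    by (simp add: split set_integral_add borel_integrable_atLeastAtMost' P_cont I_cont)
qed

end

section \<open>Convergence of finite measures via characteristic functions\<close>

lemma char_0_eq_measure: "char R 0 = complex_of_real (measure R (space R))"
  by (simp add: char_def scaleR_conv_of_real)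

lemma char_density_const:
  assumes [measurable_cong]: "sets R = sets borel" and "0 \<le> r"
  shows "char (density R (\<lambda>_. ennreal r)) v = complex_of_real r * char R v"
  unfolding char_def using \<open>0 \<le> r\<close>
  by (subst integral_density) (auto simp: scaleR_conv_of_real)

lemma integral_density_const:
  fixes g :: "real \<Rightarrow> real"
  assumes [measurable_cong]: "sets R = sets borel"
    and [measurable]: "g \<in> borel_measurable borel" and "0 \<le> r"
  shows "integral\<^sup>L (density R (\<lambda>_. ennreal r)) g = r * integral\<^sup>L R g"
  using \<open>0 \<le> r\<close> by (subst integral_density) auto

lemma (in finite_measure) abs_integral_le_measure:
  fixes g :: "'a \<Rightarrow> real"
  assumes [measurable]: "g \<in> borel_measurable M" and "\<And>x. \<bar>g x\<bar> \<le> B"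
  shows "\<bar>integral\<^sup>L M g\<bar> \<le> B * measure M (space M)"
proof -
  have "\<bar>integral\<^sup>L M g\<bar> \<le> (\<integral>x. \<bar>g x\<bar> \<partial>M)"
    using integral_norm_bound[of M g] by simp
  also have "\<dots> \<le> (\<integral>x. B \<partial>M)"
    using assms(2) order_trans[OF abs_ge_zero assms(2)]
    by (intro integral_mono integrable_const_bound[where B=B]) auto
  finally show ?thesis by (simp add: mult.commute)
qed

lemma real_distribution_normalize:
  assumes "finite_measure R" "sets R = sets borel" "0 < measure R (space R)"
  shows "real_distribution (density R (\<lambda>_. ennreal (1 / measure R (space R))))"
proof -
  interpret finite_measure R by fact
  have "emeasure (density R (\<lambda>_. ennreal (1 / measure R (space R)))) (space R) = 1"
    using assms(3) by (simp add: emeasure_density_const emeasure_eq_measure flip: ennreal_mult)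
  then show ?thesis
    using assms(2) by (auto simp: real_distribution_def real_distribution_axioms_def intro!: prob_spaceI)
qed

lemma tendsto_integral_of_measure_tendsto_0:
  fixes R :: "nat \<Rightarrow> 'a measure" and g :: "'a \<Rightarrow> real"
  assumes "\<And>n. finite_measure (R n)" "\<And>n. g \<in> borel_measurable (R n)" "\<And>x. \<bar>g x\<bar> \<le> B"
    and "(\<lambda>n. measure (R n) (space (R n))) \<longlonglongrightarrow> 0"
  shows "(\<lambda>n. integral\<^sup>L (R n) g) \<longlonglongrightarrow> 0"
proof (rule Lim_null_comparison)
  show "\<forall>\<^sub>F n in sequentially. norm (integral\<^sup>L (R n) g) \<le> B * measure (R n) (space (R n))"
    using finite_measure.abs_integral_le_measure[OF assms(1,2,3)] by simp
  show "(\<lambda>n. B * measure (R n) (space (R n))) \<longlonglongrightarrow> 0"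
    using tendsto_mult[OF tendsto_const assms(4), of B] by simp
qed

lemma tendsto_measure_space_of_tendsto_char:
  "(\<lambda>n. char (R n) 0) \<longlonglongrightarrow> char R0 0 \<Longrightarrow>
    (\<lambda>n. measure (R n) (space (R n))) \<longlonglongrightarrow> measure R0 (space R0)"
  by (simp add: char_0_eq_measure tendsto_of_real_iff)

text \<open>Dividing by the total masses, which converge by the characteristic functions at 0,
  reduces this to the Levy continuity theorem.\<close>

lemma tendsto_integral_of_tendsto_char_pos_mass:
  fixes R :: "nat \<Rightarrow> real measure" and g :: "real \<Rightarrow> real"
  assumes R: "\<And>n. finite_measure (R n)" "\<And>n. sets (R n) = sets borel"
    and R0: "finite_measure R0" "sets R0 = sets borel" "0 < measure R0 (space R0)"
    and char: "\<And>v. (\<lambda>n. char (R n) v) \<longlonglongrightarrow> char R0 v"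
    and g: "\<And>x. isCont g x" "\<And>x. \<bar>g x\<bar> \<le> B"
  shows "(\<lambda>n. integral\<^sup>L (R n) g) \<longlonglongrightarrow> integral\<^sup>L R0 g"
proof -
  define c where "c n = measure (R n) (space (R n))" for n
  define c0 where "c0 = measure R0 (space R0)"
  have c: "c \<longlonglongrightarrow> c0"
    using tendsto_measure_space_of_tendsto_char[OF char] unfolding c_def c0_def .
  have [measurable]: "g \<in> borel_measurable borel"
    using g(1) by (intro borel_measurable_continuous_onI continuous_at_imp_continuous_on) auto
  define P where "P n = (if 0 < c n then density (R n) (\<lambda>_. ennreal (1 / c n)) else return borel 0)" for n
  define P0 where "P0 = density R0 (\<lambda>_. ennreal (1 / c0))"
  have P: "real_distribution (P n)" for n
    using real_distribution_normalize[OF R(1,2), of n]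
    by (auto simp: P_def c_def real_distribution_def real_distribution_axioms_def intro: prob_space_return)
  have P0: "real_distribution P0"
    using real_distribution_normalize[OF R0] by (simp add: P0_def c0_def)
  have pos: "\<forall>\<^sub>F n in sequentially. 0 < c n"
    using order_tendstoD(1)[OF c] R0(3) by (simp add: c0_def)
  have "(\<lambda>n. complex_of_real (1 / c n) * char (R n) v) \<longlonglongrightarrow> complex_of_real (1 / c0) * char R0 v" for v
    using R0(3) by (intro tendsto_intros char c) (auto simp: c0_def)
  moreover have "\<forall>\<^sub>F n in sequentially. complex_of_real (1 / c n) * char (R n) v = char (P n) v" for v
    using pos by eventually_elim (simp add: P_def char_density_const R(2))
  ultimately have "(\<lambda>n. char (P n) v) \<longlonglongrightarrow> char P0 v" for v
    using R0(2,3) by (auto simp: P0_def c0_def char_density_const intro: Lim_transform_eventually)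
  then have "(\<lambda>n. integral\<^sup>L (P n) g) \<longlonglongrightarrow> integral\<^sup>L P0 g"
    using g by (intro weak_conv_imp_integral_bdd_continuous_conv[OF P P0] levy_continuity[OF P P0]) auto
  then have "(\<lambda>n. c n * integral\<^sup>L (P n) g) \<longlonglongrightarrow> c0 * integral\<^sup>L P0 g"
    by (intro tendsto_intros c)
  moreover have "\<forall>\<^sub>F n in sequentially. c n * integral\<^sup>L (P n) g = integral\<^sup>L (R n) g"
    using pos by eventually_elim (simp add: P_def R(2) integral_density_const)
  moreover have "c0 * integral\<^sup>L P0 g = integral\<^sup>L R0 g"
    using R0(2,3) by (simp add: P0_def c0_def integral_density_const)
  ultimately show ?thesis by (auto intro: Lim_transform_eventually)
qed

lemma tendsto_integral_of_tendsto_char: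
  fixes R :: "nat \<Rightarrow> real measure" and g :: "real \<Rightarrow> real"
  assumes R: "\<And>n. finite_measure (R n)" "\<And>n. sets (R n) = sets borel"
    and R0: "finite_measure R0" "sets R0 = sets borel"
    and char: "\<And>v. (\<lambda>n. char (R n) v) \<longlonglongrightarrow> char R0 v"
    and g: "\<And>x. isCont g x" "\<And>x. \<bar>g x\<bar> \<le> B"
  shows "(\<lambda>n. integral\<^sup>L (R n) g) \<longlonglongrightarrow> integral\<^sup>L R0 g"
proof (cases "measure R0 (space R0) = 0")
  case True
  have "g \<in> borel_measurable borel"
    using g(1) by (intro borel_measurable_continuous_onI continuous_at_imp_continuous_on) auto
  then have g_meas: "g \<in> borel_measurable (R n)" "g \<in> borel_measurable R0" for n
    by (simp_all add: measurable_cong_sets[OF R(2) refl] measurable_cong_sets[OF R0(2) refl])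
  have "integral\<^sup>L R0 g = 0"
    using finite_measure.abs_integral_le_measure[OF R0(1) g_meas(2) g(2)] True by simp
  moreover have "(\<lambda>n. integral\<^sup>L (R n) g) \<longlonglongrightarrow> 0"
    using tendsto_measure_space_of_tendsto_char[OF char] True
    by (intro tendsto_integral_of_measure_tendsto_0[where B=B] R(1) g_meas(1) g(2)) simp
  ultimately show ?thesis by simp
next
  case False
  then show ?thesis
    using R0 by (intro tendsto_integral_of_tendsto_char_pos_mass[OF R, where B=B] char g)
      (auto simp: zero_less_measure_iff)
qed

section \<open>Small-time asymptotics of the truncated moments\<close>

lemma norm_exp_minus_1_le:
  fixes z :: complex assumes "Re z \<le> 0" shows "cmod (exp z - 1) \<le> 2 * cmod z"
proof -
  have z: "z = complex_of_real (Re z) + \<i> * complex_of_real (Im z)"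
    by (simp add: complex_eq_iff)
  have "exp z - 1 = exp (complex_of_real (Re z)) * (iexp (Im z) - 1) + (exp (complex_of_real (Re z)) - 1)"
    by (subst z) (simp add: exp_add algebra_simps)
  also have "cmod \<dots> \<le> 1 * \<bar>Im z\<bar> + (1 - exp (Re z))"
  proof (rule norm_triangle_le[OF add_mono])
    have "cmod (iexp (Im z) - 1) \<le> \<bar>Im z\<bar>"
      using iexp_approx1[of "Im z" 0] by simp
    then show "cmod (exp (complex_of_real (Re z)) * (iexp (Im z) - 1)) \<le> 1 * \<bar>Im z\<bar>"
      using assms unfolding norm_mult by (intro mult_mono) auto
    show "cmod (exp (complex_of_real (Re z)) - 1) \<le> 1 - exp (Re z)"
    proof -
      have "exp (complex_of_real (Re z)) - 1 = complex_of_real (exp (Re z) - 1)"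
        by (simp add: exp_of_real)
      then show ?thesis using assms by (simp only: norm_of_real) simp
    qed
  qed
  also have "\<dots> \<le> cmod z + cmod z"
    using abs_Im_le_cmod[of z] abs_Re_le_cmod[of z] exp_ge_add_one_self[of "Re z"] by linarith
  finally show ?thesis by simp
qed

lemma tendsto_exp_difference_quotient:
  fixes z :: complex
  assumes "h \<longlonglongrightarrow> 0" "\<And>n. h n \<noteq> 0"
  shows "(\<lambda>n. (exp (complex_of_real (h n) * z) - 1) / complex_of_real (h n)) \<longlonglongrightarrow> z"
proof -
  have "((\<lambda>w. exp (w * z)) has_field_derivative z) (at 0)"
    by (auto intro!: derivative_eq_intros)
  then have "((\<lambda>w. (exp (w * z) - 1) / w) \<longlongrightarrow> z) (at 0)"
    by (simp add: has_field_derivative_iff)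
  moreover have "filterlim (\<lambda>n. complex_of_real (h n)) (at 0) sequentially"
    using assms by (auto simp: filterlim_at intro!: always_eventually tendsto_of_real[where 'a=complex, of h 0, simplified])
  ultimately show ?thesis by (rule filterlim_compose)
qed

lemma norm_exp_difference_quotient_le:
  assumes "0 < h" "Re z \<le> 0"
  shows "cmod ((exp (complex_of_real h * z) - 1) / complex_of_real h) \<le> 2 * cmod z"
proof -
  have "cmod (exp (complex_of_real h * z) - 1) \<le> 2 * cmod (complex_of_real h * z)"
    using assms by (intro norm_exp_minus_1_le) (simp add: mult_nonneg_nonpos)
  then show ?thesis
    using assms(1) by (simp add: norm_mult norm_divide field_simps)
qed

definition kernel_weighted :: "real measure \<Rightarrow> real \<Rightarrow> real measure" where
  "kernel_weighted \<mu> h = density \<mu> (\<lambda>x. ennreal (one_minus_sinc x / h))"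

context
  fixes \<mu> :: "real measure" and h :: real
  assumes \<mu>: "real_distribution \<mu>" and "0 < h"
begin

interpretation real_distribution \<mu> by (fact \<mu>)

lemma sets_kernel_weighted: "sets (kernel_weighted \<mu> h) = sets borel"
  by (simp add: kernel_weighted_def)

lemma finite_measure_kernel_weighted: "finite_measure (kernel_weighted \<mu> h)"
proof
  have "one_minus_sinc x \<le> 2" for x
    using one_minus_sinc_le[of x] min.cobounded2[of "x\<^sup>2" 1] by linarith
  then have "emeasure (kernel_weighted \<mu> h) UNIV \<le> (\<integral>\<^sup>+x. ennreal (2 / h) \<partial>\<mu>)"
    unfolding kernel_weighted_def using \<open>0 < h\<close>
    by (subst emeasure_density) (auto intro!: nn_integral_mono ennreal_leI divide_right_mono
        simp del: nn_integral_const)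
  also have "\<dots> = ennreal (2 / h)"
    using emeasure_space_1 by (simp add: space_eq_univ)
  finally show "emeasure (kernel_weighted \<mu> h) (space (kernel_weighted \<mu> h)) \<noteq> \<infinity>"
    by (auto simp: kernel_weighted_def top_unique)
qed

lemma integral_kernel_weighted:
  fixes g :: "real \<Rightarrow> real"
  assumes "g \<in> borel_measurable borel"
  shows "integral\<^sup>L (kernel_weighted \<mu> h) g = (\<integral>x. one_minus_sinc x * g x \<partial>\<mu>) / h"
  unfolding kernel_weighted_def using assms \<open>0 < h\<close>
  by (subst integral_real_density) (auto simp: one_minus_sinc_nonneg)

lemma char_kernel_weighted:
  "char (kernel_weighted \<mu> h) v = (CLBINT u:{-1..1}. char \<mu> v - char \<mu> (v + u)) / (2 * complex_of_real h)"
proof -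
  have "char (kernel_weighted \<mu> h) v
      = (CLINT x|\<mu>. complex_of_real (one_minus_sinc x) * iexp (v * x)) / complex_of_real h"
    unfolding char_def kernel_weighted_def using \<open>0 < h\<close>
    by (subst integral_density) (auto simp: one_minus_sinc_nonneg scaleR_conv_of_real)
  then show ?thesis
    by (simp add: set_integral_char_diff[OF \<mu>])
qed

end

context levy_measure
begin

context
  fixes b q :: real and \<mu> :: "nat \<Rightarrow> real measure" and h :: "nat \<Rightarrow> real"
  assumes q_nonneg: "0 \<le> q" and \<mu>: "\<And>n. real_distribution (\<mu> n)"
    and h: "\<And>n. 0 < h n" "h \<longlonglongrightarrow> 0"
    and char_\<mu>: "\<And>n \<beta>. char (\<mu> n) \<beta> = exp (complex_of_real (h n) * lk_exponent b q lam \<beta>)"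
begin

interpretation \<mu>: real_distribution "\<mu> n" for n by (fact \<mu>)

lemma tendsto_char_kernel_weighted:
  "(\<lambda>n. char (kernel_weighted (\<mu> n) (h n)) v) \<longlonglongrightarrow> char (lk_kernel_measure q lam) v"
proof -
  let ?\<psi> = "lk_exponent b q lam"
  define Q where "Q n z = (exp (complex_of_real (h n) * z) - 1) / complex_of_real (h n)" for n z
  have h_nz: "h n \<noteq> 0" for n
    using h(1)[of n] by simp
  have char_eq: "char (kernel_weighted (\<mu> n) (h n)) v
      = (CLBINT u:{-1..1}. Q n (?\<psi> v) - Q n (?\<psi> (v + u))) / 2" for n
    using char_kernel_weighted[OF \<mu>[of n] h(1)[of n], of v] h_nz[of n]
    by (simp add: char_\<mu> Q_def diff_divide_distrib mult.commute flip: set_integral_divide_zero)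
  have "compact (?\<psi> ` {v - 1..v + 1})"
    by (intro compact_continuous_image continuous_at_imp_continuous_on ballI isCont_lk_exponent)
      auto
  then obtain K where K: "\<And>\<beta>. \<beta> \<in> {v - 1..v + 1} \<Longrightarrow> cmod (?\<psi> \<beta>) \<le> K"
    by (metis compact_imp_bounded bounded_iff image_eqI)
  have Q_le: "cmod (Q n (?\<psi> \<beta>)) \<le> 2 * cmod (?\<psi> \<beta>)" for n \<beta>
    unfolding Q_def using h(1) Re_lk_exponent_nonpos[OF q_nonneg]
    by (rule norm_exp_difference_quotient_le)
  have "(\<lambda>n. CLBINT u:{-1..1}. Q n (?\<psi> v) - Q n (?\<psi> (v + u)))
      \<longlonglongrightarrow> (CLBINT u:{-1..1}. ?\<psi> v - ?\<psi> (v + u))"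
    unfolding set_lebesgue_integral_def
  proof (rule integral_dominated_convergence[where w="\<lambda>u. indicator {-1..1} u * (4 * K)"])
    show "AE u in lborel. (\<lambda>n. indicat_real {-1..1} u *\<^sub>R (Q n (?\<psi> v) - Q n (?\<psi> (v + u))))
        \<longlonglongrightarrow> indicat_real {-1..1} u *\<^sub>R (?\<psi> v - ?\<psi> (v + u))"
      unfolding Q_def using h(2) h_nz by (intro AE_I2 tendsto_intros tendsto_exp_difference_quotient)
    show "AE u in lborel. norm (indicat_real {-1..1} u *\<^sub>R (Q n (?\<psi> v) - Q n (?\<psi> (v + u))))
        \<le> indicator {-1..1} u * (4 * K)" for n
    proof (intro AE_I2)
      fix u :: real
      have "cmod (Q n (?\<psi> v) - Q n (?\<psi> (v + u))) \<le> 4 * K" if "u \<in> {-1..1}"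
        using norm_triangle_ineq4[of "Q n (?\<psi> v)" "Q n (?\<psi> (v + u))"] Q_le[of n v]
          Q_le[of n "v + u"] K[of v] K[of "v + u"] that by auto
      then show "norm (indicat_real {-1..1} u *\<^sub>R (Q n (?\<psi> v) - Q n (?\<psi> (v + u))))
          \<le> indicator {-1..1} u * (4 * K)"
        by (simp split: split_indicator)
    qed
  qed (simp_all add: Q_def measurable_compose[OF _ borel_measurable_lk_exponent])
  then show ?thesis
    unfolding char_eq set_integral_lk_exponent_diff[OF q_nonneg]
    using tendsto_divide[OF _ tendsto_const, of _ _ _ 2] by fastforce
qed

lemma tendsto_integral_kernel_weighted:
  fixes g :: "real \<Rightarrow> real"
  assumes "\<And>x. isCont g x" "\<And>x. \<bar>g x\<bar> \<le> B"
  shows "(\<lambda>n. integral\<^sup>L (kernel_weighted (\<mu> n) (h n)) g) \<longlonglongrightarrow> integral\<^sup>L (lk_kernel_measure q lam) g"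
proof (rule tendsto_integral_of_tendsto_char[where R="\<lambda>n. kernel_weighted (\<mu> n) (h n)"])
  show "finite_measure (kernel_weighted (\<mu> n) (h n))" "sets (kernel_weighted (\<mu> n) (h n)) = sets borel"
    for n using finite_measure_kernel_weighted sets_kernel_weighted \<mu> h(1) by blast+
qed (use assms finite_measure_lk_kernel_measure tendsto_char_kernel_weighted in auto)

lemma tendsto_trunc_sq_moment:
  "(\<lambda>n. (\<integral>x. (trunc x)\<^sup>2 \<partial>\<mu> n) / h n) \<longlonglongrightarrow> (\<integral>\<alpha>. min (\<alpha>\<^sup>2) 1 \<partial>lam) + q"
proof -
  have "integral\<^sup>L (kernel_weighted (\<mu> n) (h n)) trunc_sq_ratio = (\<integral>x. (trunc x)\<^sup>2 \<partial>\<mu> n) / h n" for n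
    by (simp add: integral_kernel_weighted[OF \<mu> h(1)] one_minus_sinc_mult_trunc_sq_ratio)
  moreover have "integral\<^sup>L (lk_kernel_measure q lam) trunc_sq_ratio = (\<integral>\<alpha>. min (\<alpha>\<^sup>2) 1 \<partial>lam) + q"
    using abs_trunc_sq_ratio_le q_nonneg
    by (subst integral_lk_kernel_measure[where B="15/2"])
      (simp_all add: one_minus_sinc_mult_trunc_sq_ratio trunc_square trunc_sq_ratio_def[of 0])
  ultimately show ?thesis
    using tendsto_integral_kernel_weighted[OF isCont_trunc_sq_ratio abs_trunc_sq_ratio_le] by simp
qed

text \<open>Split \<open>\<tau> = sin + (1 - sin x / x) \<cdot> trunc_sin_ratio\<close>: the \<open>sin\<close> part is the imaginary part
  of the characteristic function at 1, the rest is integrated against the kernel-weighted law.\<close>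

lemma integral_trunc_div_eq:
  "(\<integral>x. trunc x \<partial>\<mu> n) / h n
    = Im ((exp (complex_of_real (h n) * lk_exponent b q lam 1) - 1) / complex_of_real (h n))
      + integral\<^sup>L (kernel_weighted (\<mu> n) (h n)) trunc_sin_ratio"
proof -
  have "\<bar>trunc x - sin x\<bar> \<le> 2" for x
    using abs_trunc_le_1[of x] abs_sin_le_one[of x] by arith
  then have "integrable (\<mu> n) (\<lambda>x. trunc x - sin x)"
    by (intro \<mu>.integrable_const_bound[where B=2]) auto
  moreover have "integrable (\<mu> n) sin"
    using abs_sin_le_one by (intro \<mu>.integrable_const_bound[where B=1]) auto
  ultimately have "(\<integral>x. trunc x \<partial>\<mu> n) = (\<integral>x. sin x \<partial>\<mu> n) + (\<integral>x. trunc x - sin x \<partial>\<mu> n)"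
    by (simp flip: Bochner_Integration.integral_add)
  also have "(\<integral>x. sin x \<partial>\<mu> n) = Im (char (\<mu> n) 1)"
    unfolding char_def
    by (subst integral_Im[symmetric]) (auto simp: Im_exp intro!: \<mu>.integrable_const_bound[where B=1])
  finally show ?thesis
    using h(1)[of n]
    by (simp add: integral_kernel_weighted[OF \<mu> h(1)] one_minus_sinc_mult_trunc_sin_ratio
        char_\<mu> add_divide_distrib)
qed

lemma tendsto_trunc_moment: "(\<lambda>n. (\<integral>x. trunc x \<partial>\<mu> n) / h n) \<longlonglongrightarrow> b"
proof -
  have "(\<lambda>n. (\<integral>x. trunc x \<partial>\<mu> n) / h n)
      \<longlonglongrightarrow> Im (lk_exponent b q lam 1) + integral\<^sup>L (lk_kernel_measure q lam) trunc_sin_ratio"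
    unfolding integral_trunc_div_eq using h(2) h(1)[THEN less_imp_neq, THEN not_sym]
    by (intro tendsto_intros tendsto_exp_difference_quotient
        tendsto_integral_kernel_weighted[OF isCont_trunc_sin_ratio abs_trunc_sin_ratio_le])
  moreover have "integral\<^sup>L (lk_kernel_measure q lam) trunc_sin_ratio = (\<integral>\<alpha>. trunc \<alpha> - sin \<alpha> \<partial>lam)"
    using abs_trunc_sin_ratio_le q_nonneg
    by (subst integral_lk_kernel_measure[where B=15])
      (simp_all add: one_minus_sinc_mult_trunc_sin_ratio trunc_sin_ratio_def[of 0])
  moreover have "(\<integral>\<alpha>. trunc \<alpha> - sin \<alpha> \<partial>lam) = - (\<integral>\<alpha>. sin \<alpha> - trunc \<alpha> \<partial>lam)"
    by (simp flip: Bochner_Integration.integral_minus)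
  ultimately show ?thesis
    by (simp add: Im_lk_exponent_1)
qed

end

end

context levy_with_characteristics
begin

lemma tendsto_law_trunc_moments:
  shows "((\<lambda>h. (\<integral>x. trunc x \<partial>law h) / h) \<longlongrightarrow> b) (at_right 0)"
    and "((\<lambda>h. (\<integral>x. (trunc x)\<^sup>2 \<partial>law h) / h) \<longlongrightarrow> (\<integral>\<alpha>. min (\<alpha>\<^sup>2) 1 \<partial>lam) + q) (at_right 0)"
proof -
  have "(\<lambda>n. (\<integral>x. trunc x \<partial>law (h n)) / h n) \<longlonglongrightarrow> b \<and>
      (\<lambda>n. (\<integral>x. (trunc x)\<^sup>2 \<partial>law (h n)) / h n) \<longlonglongrightarrow> (\<integral>\<alpha>. min (\<alpha>\<^sup>2) 1 \<partial>lam) + q"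
    if "\<forall>n. h n \<in> {0<..}" "h \<longlonglongrightarrow> 0" for h :: "nat \<Rightarrow> real"
    using that tendsto_trunc_moment[OF q_nonneg, of "\<lambda>n. law (h n)" h]
      tendsto_trunc_sq_moment[OF q_nonneg, of "\<lambda>n. law (h n)" h]
    by (simp add: real_distribution_law char_law less_imp_le)
  then show "((\<lambda>h. (\<integral>x. trunc x \<partial>law h) / h) \<longlongrightarrow> b) (at_right 0)"
    and "((\<lambda>h. (\<integral>x. (trunc x)\<^sup>2 \<partial>law h) / h) \<longlongrightarrow> (\<integral>\<alpha>. min (\<alpha>\<^sup>2) 1 \<partial>lam) + q) (at_right 0)"
    unfolding tendsto_at_iff_sequentially comp_def by auto
qed

end

section \<open>Partition sums\<close>

lemma normal_partitions_mono:
  assumes "normal_partitions s t m p" "j \<le> k" "k \<le> m n"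
  shows "p n j \<le> p n k"
  using assms(2,3)
proof (induction k)
  case (Suc k)
  show ?case
  proof (cases "j = Suc k")
    case False
    then have "p n j \<le> p n k" using Suc by simp
    also have "p n k < p n (Suc k)"
      using assms(1) Suc.prems unfolding normal_partitions_def by simp
    finally show ?thesis by simp
  qed simp
qed simp

lemma normal_partitions_increment_pos:
  assumes "normal_partitions s t m p" "k \<in> {1..m n}"
  shows "0 < p n k - p n (k - 1)"
proof -
  have "k - 1 < m n" "Suc (k - 1) = k"
    using assms(2) by auto
  then show ?thesis
    using assms(1) unfolding normal_partitions_def by (metis diff_gt_0_iff_gt)
qed

lemma normal_partitions_sum_increments:
  "normal_partitions s t m p \<Longrightarrow> (\<Sum>k=1..m n. p n k - p n (k - 1)) = t - s"
  using sum_telescope''[of 0 "m n" "p n"] unfolding normal_partitions_def by simp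

lemma abs_sum_sub_mult_sum_le:
  fixes f d :: "'a \<Rightarrow> real"
  assumes "\<And>k. k \<in> K \<Longrightarrow> 0 < d k" "\<And>k. k \<in> K \<Longrightarrow> \<bar>f k / d k - c\<bar> \<le> e"
  shows "\<bar>(\<Sum>k\<in>K. f k) - c * (\<Sum>k\<in>K. d k)\<bar> \<le> e * (\<Sum>k\<in>K. d k)"
proof -
  have "\<bar>f k - c * d k\<bar> \<le> e * d k" if "k \<in> K" for k
  proof -
    have "\<bar>f k / d k - c\<bar> * d k \<le> e * d k"
      using assms[OF that] by (intro mult_right_mono) auto
    then show ?thesis
      using assms(1)[OF that] by (simp add: abs_mult_pos[symmetric] field_simps)
  qed
  then have "(\<Sum>k\<in>K. \<bar>f k - c * d k\<bar>) \<le> e * (\<Sum>k\<in>K. d k)"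
    by (simp add: sum_distrib_left sum_mono)
  moreover have "\<bar>(\<Sum>k\<in>K. f k) - c * (\<Sum>k\<in>K. d k)\<bar> \<le> (\<Sum>k\<in>K. \<bar>f k - c * d k\<bar>)"
    by (simp add: sum_distrib_left sum_subtractf[symmetric] sum_abs)
  ultimately show ?thesis by linarith
qed

lemma tendsto_sum_normal_partitions:
  fixes f :: "real \<Rightarrow> real"
  assumes lim: "((\<lambda>h. f h / h) \<longlongrightarrow> c) (at_right 0)" and np: "normal_partitions s t m p"
  shows "(\<lambda>n. \<Sum>k=1..m n. f (p n k - p n (k - 1))) \<longlonglongrightarrow> (t - s) * c"
proof (rule tendstoI)
  fix \<epsilon> :: real assume "0 < \<epsilon>"
  define d where "d n k = p n k - p n (k - 1)" for n k
  define mesh where "mesh n = Max {p n k - p n (k - 1) | k. 1 \<le> k \<and> k \<le> m n}" for n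
  have "0 \<le> t - s"
    using normal_partitions_mono[OF np, of 0 "m 0" 0] np unfolding normal_partitions_def by simp
  define e where "e = \<epsilon> / (2 * (t - s) + 1)"
  have "\<epsilon> * (t - s) < \<epsilon> * (2 * (t - s) + 1)"
    using \<open>0 < \<epsilon>\<close> \<open>0 \<le> t - s\<close> by (intro mult_strict_left_mono) auto
  then have "0 < e" "e * (t - s) < \<epsilon>"
    using \<open>0 < \<epsilon>\<close> \<open>0 \<le> t - s\<close> by (simp_all add: e_def field_simps)
  obtain \<delta> where "0 < \<delta>" and \<delta>: "\<And>h. 0 < h \<Longrightarrow> h < \<delta> \<Longrightarrow> \<bar>f h / h - c\<bar> < e"
    using tendstoD[OF lim \<open>0 < e\<close>] by (auto simp: eventually_at_right_field dist_real_def)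
  have "mesh \<longlonglongrightarrow> 0"
    using np unfolding normal_partitions_def mesh_def by simp
  then have "\<forall>\<^sub>F n in sequentially. mesh n < \<delta>"
    using \<open>0 < \<delta>\<close> by (rule order_tendstoD)
  then show "\<forall>\<^sub>F n in sequentially. dist (\<Sum>k=1..m n. f (p n k - p n (k - 1))) ((t - s) * c) < \<epsilon>"
  proof eventually_elim
    case (elim n)
    have "\<bar>f (d n k) / d n k - c\<bar> \<le> e" if "k \<in> {1..m n}" for k
    proof -
      have "d n k \<le> mesh n"
        using that unfolding mesh_def d_def by (intro Max_ge) auto
      then show ?thesis
        using \<delta>[of "d n k"] normal_partitions_increment_pos[OF np that] elim by (simp add: d_def)
    qed
    then have "\<bar>(\<Sum>k=1..m n. f (d n k)) - c * (t - s)\<bar> \<le> e * (t - s)"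
      using abs_sum_sub_mult_sum_le[of "{1..m n}" "d n" "\<lambda>k. f (d n k)" c e]
        normal_partitions_increment_pos[OF np] normal_partitions_sum_increments[OF np, of n]
      by (simp add: d_def)
    then show ?case
      using \<open>e * (t - s) < \<epsilon>\<close> by (simp add: d_def dist_real_def mult.commute)
  qed
qed

lemma (in levy) sum_integral_partition_increments:
  fixes g :: "real \<Rightarrow> real"
  assumes np: "normal_partitions s t m p" and "0 \<le> s" "g \<in> borel_measurable borel"
  shows "(\<Sum>k=1..m n. \<integral>\<omega>. g (L (p n k) \<omega> - L (p n (k - 1)) \<omega>) \<partial>M)
    = (\<Sum>k=1..m n. \<integral>x. g x \<partial>law (p n k - p n (k - 1)))"
proof (intro sum.cong refl integral_increment)
  fix k assume k: "k \<in> {1..m n}"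
  then have "p n 0 \<le> p n (k - 1)"
    by (intro normal_partitions_mono[OF np]) auto
  then show "0 \<le> p n (k - 1)"
    using assms unfolding normal_partitions_def by simp
  show "p n (k - 1) \<le> p n k"
    using k by (intro normal_partitions_mono[OF np]) auto
qed (use assms in auto)

theorem lemma3p9:
  fixes M :: "'a measure" and L :: "real \<Rightarrow> 'a \<Rightarrow> real"
    and b q s t :: real and lam :: "real measure"
    and m :: "nat \<Rightarrow> nat" and p :: "nat \<Rightarrow> nat \<Rightarrow> real"
  assumes "levy_process M L"
    and "levy_characteristics M L b q lam"
    and "0 \<le> s" and "s < t"
    and "normal_partitions s t m p"
  shows "((\<lambda>n. \<Sum>k=1..m n. integral\<^sup>L M (\<lambda>\<omega>. trunc (L (p n k) \<omega> - L (p n (k - 1)) \<omega>)))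
           \<longlonglongrightarrow> (t - s) * b)
         \<and> ((\<lambda>n. \<Sum>k=1..m n. integral\<^sup>L M (\<lambda>\<omega>. (trunc (L (p n k) \<omega> - L (p n (k - 1)) \<omega>))\<^sup>2))
           \<longlonglongrightarrow> (t - s) * ((\<integral>\<beta>. min (\<bar>\<beta>\<bar>\<^sup>2) 1 \<partial>lam) + q))"
proof -
  interpret levy_with_characteristics M L b q lam
    using assms(1,2) by (intro levy_with_characteristics.intro levy.intro levy_with_characteristics_axioms.intro)
  have trunc_sq: "(\<lambda>x. (trunc x)\<^sup>2) \<in> borel_measurable borel"
    by measurable
  show ?thesis
    unfolding sum_integral_partition_increments[OF assms(5,3) borel_measurable_trunc]
      sum_integral_partition_increments[OF assms(5,3) trunc_sq]
    using tendsto_sum_normal_partitions[OF tendsto_law_trunc_moments(1) assms(5)]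
      tendsto_sum_normal_partitions[OF tendsto_law_trunc_moments(2) assms(5)]
    by simp
qed

end
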